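(* Let $G$ be a group, $j\colon K\to L$ a Dwyer $G$-map of $G$-posets, and $f\colon K\to X$ any map of $G$-posets, and form the pushout $Y=L\cup_K X$ in $G\mathbf{Cat}$. Then $Y$ is a $G$-poset, and for every subgroup $H\le G$ the square of $H$-fixed points $K^H\to X^H$, $K^H\to L^H$, $X^H\to Y^H$, $L^H\to Y^H$ is a pushout (in $\mathbf{Cat}$, equivalently in $\mathbf{Pos}$).
   Context: A subcategory $\mathcal{S}$ of $\mathcal{C}$ is a sieve if every morphism $c\to s$ with $s\in\mathcal{S}$ lies in $\mathcal{S}$ together with $c$; a cosieve dually. A Dwyer $G$-map is a $G$-functor that is the inclusion of a sieve and factors equivariantly as $\mathcal{S}\xrightarrow{i}\mathcal{T}\xrightarrow{j}\mathcal{C}$ with $j$ the inclusion of a cosieve and $i$ an inclusion with an equivariant right adjoint $r$ whose unit $\mathrm{id}\to r\circ i$ is the identity. Posets are regarded as categories; $X^H$ denotes the subposet of $H$-fixed elements. *)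

theory Defs
  imports "HOL-Algebra.Group"
begin

text \<open>A (small) category: objects, arrows, source, target, identities and
  composition (Cmp C g f is g after f, defined when Tgt f = Src g).\<close>

record ('o, 'm) cat =
  Obj :: "'o set"
  Arr :: "'m set"
  Src :: "'m \<Rightarrow> 'o"
  Tgt :: "'m \<Rightarrow> 'o"
  Idt :: "'o \<Rightarrow> 'm"
  Cmp :: "'m \<Rightarrow> 'm \<Rightarrow> 'm"

definition category :: "('o, 'm) cat \<Rightarrow> bool" where
  "category C \<longleftrightarrow>
     (\<forall>f\<in>Arr C. Src C f \<in> Obj C \<and> Tgt C f \<in> Obj C) \<and>
     (\<forall>a\<in>Obj C. Idt C a \<in> Arr C \<and> Src C (Idt C a) = a \<and> Tgt C (Idt C a) = a) \<and>
     (\<forall>f\<in>Arr C. \<forall>g\<in>Arr C. Tgt C f = Src C g \<longrightarrow>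
        Cmp C g f \<in> Arr C \<and> Src C (Cmp C g f) = Src C f \<and> Tgt C (Cmp C g f) = Tgt C g) \<and>
     (\<forall>f\<in>Arr C. Cmp C (Idt C (Tgt C f)) f = f \<and> Cmp C f (Idt C (Src C f)) = f) \<and>
     (\<forall>f\<in>Arr C. \<forall>g\<in>Arr C. \<forall>h\<in>Arr C. Tgt C f = Src C g \<and> Tgt C g = Src C h \<longrightarrow>
        Cmp C h (Cmp C g f) = Cmp C (Cmp C h g) f)"

definition is_poset :: "('o, 'm) cat \<Rightarrow> bool" where
  "is_poset C \<longleftrightarrow> category C \<and>
     (\<forall>f\<in>Arr C. \<forall>f'\<in>Arr C. Src C f = Src C f' \<and> Tgt C f = Tgt C f' \<longrightarrow> f = f') \<and>
     (\<forall>f\<in>Arr C. \<forall>g\<in>Arr C. Src C f = Tgt C g \<and> Tgt C f = Src C g \<longrightarrow> Src C f = Tgt C f)"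

type_synonym ('o, 'm, 'p, 'n) ftr = "('o \<Rightarrow> 'p) \<times> ('m \<Rightarrow> 'n)"

definition is_functor :: "('o, 'm) cat \<Rightarrow> ('p, 'n) cat \<Rightarrow> ('o, 'm, 'p, 'n) ftr \<Rightarrow> bool" where
  "is_functor C D F \<longleftrightarrow>
     (\<forall>a\<in>Obj C. fst F a \<in> Obj D) \<and>
     (\<forall>f\<in>Arr C. snd F f \<in> Arr D \<and> Src D (snd F f) = fst F (Src C f) \<and>
                  Tgt D (snd F f) = fst F (Tgt C f)) \<and>
     (\<forall>a\<in>Obj C. snd F (Idt C a) = Idt D (fst F a)) \<and>
     (\<forall>f\<in>Arr C. \<forall>g\<in>Arr C. Tgt C f = Src C g \<longrightarrow> snd F (Cmp C g f) = Cmp D (snd F g) (snd F f))"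

definition idF :: "('o, 'm, 'o, 'm) ftr" where
  "idF = (id, id)"

definition fcomp :: "('p, 'n, 'q, 'k) ftr \<Rightarrow> ('o, 'm, 'p, 'n) ftr \<Rightarrow> ('o, 'm, 'q, 'k) ftr" where
  "fcomp F F' = (fst F \<circ> fst F', snd F \<circ> snd F')"

definition ftr_eq :: "('o, 'm) cat \<Rightarrow> ('o, 'm, 'p, 'n) ftr \<Rightarrow> ('o, 'm, 'p, 'n) ftr \<Rightarrow> bool" where
  "ftr_eq C F F' \<longleftrightarrow> (\<forall>a\<in>Obj C. fst F a = fst F' a) \<and> (\<forall>f\<in>Arr C. snd F f = snd F' f)"

definition nat_trans ::
  "('o, 'm) cat \<Rightarrow> ('p, 'n) cat \<Rightarrow> ('o, 'm, 'p, 'n) ftr \<Rightarrow> ('o, 'm, 'p, 'n) ftr \<Rightarrow> ('o \<Rightarrow> 'n) \<Rightarrow> bool" where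
  "nat_trans C D F F' \<tau> \<longleftrightarrow>
     (\<forall>a\<in>Obj C. \<tau> a \<in> Arr D \<and> Src D (\<tau> a) = fst F a \<and> Tgt D (\<tau> a) = fst F' a) \<and>
     (\<forall>f\<in>Arr C. Cmp D (\<tau> (Tgt C f)) (snd F f) = Cmp D (snd F' f) (\<tau> (Src C f)))"

definition adjunction ::
  "('o, 'm) cat \<Rightarrow> ('p, 'n) cat \<Rightarrow> ('o, 'm, 'p, 'n) ftr \<Rightarrow> ('p, 'n, 'o, 'm) ftr
     \<Rightarrow> ('o \<Rightarrow> 'm) \<Rightarrow> ('p \<Rightarrow> 'n) \<Rightarrow> bool" where
  "adjunction C D F R \<eta> \<epsilon> \<longleftrightarrow>
     is_functor C D F \<and> is_functor D C R \<and>
     nat_trans C C idF (fcomp R F) \<eta> \<and> nat_trans D D (fcomp F R) idF \<epsilon> \<and>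
     (\<forall>a\<in>Obj C. Cmp D (\<epsilon> (fst F a)) (snd F (\<eta> a)) = Idt D (fst F a)) \<and>
     (\<forall>b\<in>Obj D. Cmp C (snd R (\<epsilon> b)) (\<eta> (fst R b)) = Idt C (fst R b))"

definition is_subcat :: "('o, 'm) cat \<Rightarrow> 'o set \<Rightarrow> 'm set \<Rightarrow> bool" where
  "is_subcat C Ob M \<longleftrightarrow> Ob \<subseteq> Obj C \<and> M \<subseteq> Arr C \<and>
     (\<forall>f\<in>M. Src C f \<in> Ob \<and> Tgt C f \<in> Ob) \<and> (\<forall>a\<in>Ob. Idt C a \<in> M) \<and>
     (\<forall>f\<in>M. \<forall>g\<in>M. Tgt C f = Src C g \<longrightarrow> Cmp C g f \<in> M)"

definition subcat :: "('o, 'm) cat \<Rightarrow> 'o set \<Rightarrow> 'm set \<Rightarrow> ('o, 'm) cat" where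
  "subcat C Ob M = C\<lparr>Obj := Ob, Arr := M\<rparr>"

definition gcat :: "('g, 'b) monoid_scheme \<Rightarrow> ('o, 'm) cat \<Rightarrow> ('g \<Rightarrow> ('o, 'm, 'o, 'm) ftr) \<Rightarrow> bool" where
  "gcat G C act \<longleftrightarrow> category C \<and>
     (\<forall>g\<in>carrier G. is_functor C C (act g)) \<and>
     ftr_eq C (act \<one>\<^bsub>G\<^esub>) idF \<and>
     (\<forall>g\<in>carrier G. \<forall>h\<in>carrier G. ftr_eq C (act (g \<otimes>\<^bsub>G\<^esub> h)) (fcomp (act g) (act h)))"

definition gposet :: "('g, 'b) monoid_scheme \<Rightarrow> ('o, 'm) cat \<Rightarrow> ('g \<Rightarrow> ('o, 'm, 'o, 'm) ftr) \<Rightarrow> bool" where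
  "gposet G C act \<longleftrightarrow> gcat G C act \<and> is_poset C"

definition gfunctor ::
  "('g, 'b) monoid_scheme \<Rightarrow> ('o, 'm) cat \<Rightarrow> ('g \<Rightarrow> ('o, 'm, 'o, 'm) ftr)
     \<Rightarrow> ('p, 'n) cat \<Rightarrow> ('g \<Rightarrow> ('p, 'n, 'p, 'n) ftr) \<Rightarrow> ('o, 'm, 'p, 'n) ftr \<Rightarrow> bool" where
  "gfunctor G C a D b F \<longleftrightarrow> is_functor C D F \<and>
     (\<forall>g\<in>carrier G. ftr_eq C (fcomp F (a g)) (fcomp (b g) F))"

definition fixcat :: "('o, 'm) cat \<Rightarrow> ('g \<Rightarrow> ('o, 'm, 'o, 'm) ftr) \<Rightarrow> 'g set \<Rightarrow> ('o, 'm) cat" where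
  "fixcat C act H = C\<lparr>Obj := {a\<in>Obj C. \<forall>h\<in>H. fst (act h) a = a},
                      Arr := {f\<in>Arr C. \<forall>h\<in>H. snd (act h) f = f}\<rparr>"

text \<open>J : K -> L is (isomorphic onto) the inclusion of a sieve, and factors equivariantly
  as K -> T -> L where T = (OT, MT) is a G-stable cosieve of L, and the corestriction
  i : K -> T of J has an equivariant right adjoint r with identity unit.\<close>

definition dwyer_gmap ::
  "('g, 'b) monoid_scheme \<Rightarrow> ('ko, 'km) cat \<Rightarrow> ('g \<Rightarrow> ('ko, 'km, 'ko, 'km) ftr)
     \<Rightarrow> ('lo, 'lm) cat \<Rightarrow> ('g \<Rightarrow> ('lo, 'lm, 'lo, 'lm) ftr) \<Rightarrow> ('ko, 'km, 'lo, 'lm) ftr \<Rightarrow> bool" where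
  "dwyer_gmap G K aK L aL J \<longleftrightarrow>
     gfunctor G K aK L aL J \<and>
     inj_on (fst J) (Obj K) \<and> inj_on (snd J) (Arr K) \<and>
     (\<forall>\<phi>\<in>Arr L. Tgt L \<phi> \<in> fst J ` Obj K \<longrightarrow> \<phi> \<in> snd J ` Arr K \<and> Src L \<phi> \<in> fst J ` Obj K) \<and>
     (\<exists>OT MT. is_subcat L OT MT \<and>
        (\<forall>\<phi>\<in>Arr L. Src L \<phi> \<in> OT \<longrightarrow> \<phi> \<in> MT \<and> Tgt L \<phi> \<in> OT) \<and>
        (\<forall>g\<in>carrier G. fst (aL g) ` OT \<subseteq> OT \<and> snd (aL g) ` MT \<subseteq> MT) \<and>
        fst J ` Obj K \<subseteq> OT \<and> snd J ` Arr K \<subseteq> MT \<and>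
        (\<exists>r \<epsilon>. gfunctor G (subcat L OT MT) aL K aK r \<and>
               adjunction K (subcat L OT MT) J r (\<lambda>a. Idt K a) \<epsilon>))"

definition comm_square ::
  "('ao, 'am) cat \<Rightarrow> ('bo, 'bm) cat \<Rightarrow> ('co, 'cm) cat \<Rightarrow> ('do, 'dm) cat
    \<Rightarrow> ('ao, 'am, 'bo, 'bm) ftr \<Rightarrow> ('ao, 'am, 'co, 'cm) ftr
    \<Rightarrow> ('bo, 'bm, 'do, 'dm) ftr \<Rightarrow> ('co, 'cm, 'do, 'dm) ftr \<Rightarrow> bool" where
  "comm_square A B C D F J U V \<longleftrightarrow>
     category A \<and> category B \<and> category C \<and> category D \<and>
     is_functor A B F \<and> is_functor A C J \<and> is_functor B D U \<and> is_functor C D V \<and>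
     ftr_eq A (fcomp U F) (fcomp V J)"

definition po_univ ::
  "('ao, 'am) cat \<Rightarrow> ('bo, 'bm) cat \<Rightarrow> ('co, 'cm) cat \<Rightarrow> ('do, 'dm) cat
    \<Rightarrow> ('ao, 'am, 'bo, 'bm) ftr \<Rightarrow> ('ao, 'am, 'co, 'cm) ftr
    \<Rightarrow> ('bo, 'bm, 'do, 'dm) ftr \<Rightarrow> ('co, 'cm, 'do, 'dm) ftr \<Rightarrow> ('eo, 'em) cat \<Rightarrow> bool" where
  "po_univ A B C D F J U V E \<longleftrightarrow>
     (\<forall>P Q. is_functor B E P \<and> is_functor C E Q \<and> ftr_eq A (fcomp P F) (fcomp Q J) \<longrightarrow>
        (\<exists>W. is_functor D E W \<and> ftr_eq B (fcomp W U) P \<and> ftr_eq C (fcomp W V) Q \<and>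
           (\<forall>W'. is_functor D E W' \<and> ftr_eq B (fcomp W' U) P \<and> ftr_eq C (fcomp W' V) Q
                  \<longrightarrow> ftr_eq D W W')))"

definition gpo_univ ::
  "('g, 'b) monoid_scheme
    \<Rightarrow> ('ao, 'am) cat \<Rightarrow> ('g \<Rightarrow> ('ao, 'am, 'ao, 'am) ftr)
    \<Rightarrow> ('bo, 'bm) cat \<Rightarrow> ('g \<Rightarrow> ('bo, 'bm, 'bo, 'bm) ftr)
    \<Rightarrow> ('co, 'cm) cat \<Rightarrow> ('g \<Rightarrow> ('co, 'cm, 'co, 'cm) ftr)
    \<Rightarrow> ('do, 'dm) cat \<Rightarrow> ('g \<Rightarrow> ('do, 'dm, 'do, 'dm) ftr)
    \<Rightarrow> ('ao, 'am, 'bo, 'bm) ftr \<Rightarrow> ('ao, 'am, 'co, 'cm) ftr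
    \<Rightarrow> ('bo, 'bm, 'do, 'dm) ftr \<Rightarrow> ('co, 'cm, 'do, 'dm) ftr
    \<Rightarrow> ('eo, 'em) cat \<Rightarrow> ('g \<Rightarrow> ('eo, 'em, 'eo, 'em) ftr) \<Rightarrow> bool" where
  "gpo_univ G A aA B aB C aC D aD F J U V E aE \<longleftrightarrow>
     (\<forall>P Q. gfunctor G B aB E aE P \<and> gfunctor G C aC E aE Q \<and> ftr_eq A (fcomp P F) (fcomp Q J) \<longrightarrow>
        (\<exists>W. gfunctor G D aD E aE W \<and> ftr_eq B (fcomp W U) P \<and> ftr_eq C (fcomp W V) Q \<and>
           (\<forall>W'. gfunctor G D aD E aE W' \<and> ftr_eq B (fcomp W' U) P \<and> ftr_eq C (fcomp W' V) Q
                  \<longrightarrow> ftr_eq D W W')))"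

text \<open>The universal property is required against all test
  G-categories whose object/arrow types are those of D; in the main theorem D is given
  types large enough to carry the genuine pushout.\<close>

definition gpushout ::
  "('g, 'b) monoid_scheme
    \<Rightarrow> ('ao, 'am) cat \<Rightarrow> ('g \<Rightarrow> ('ao, 'am, 'ao, 'am) ftr)
    \<Rightarrow> ('bo, 'bm) cat \<Rightarrow> ('g \<Rightarrow> ('bo, 'bm, 'bo, 'bm) ftr)
    \<Rightarrow> ('co, 'cm) cat \<Rightarrow> ('g \<Rightarrow> ('co, 'cm, 'co, 'cm) ftr)
    \<Rightarrow> ('do, 'dm) cat \<Rightarrow> ('g \<Rightarrow> ('do, 'dm, 'do, 'dm) ftr)
    \<Rightarrow> ('ao, 'am, 'bo, 'bm) ftr \<Rightarrow> ('ao, 'am, 'co, 'cm) ftr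
    \<Rightarrow> ('bo, 'bm, 'do, 'dm) ftr \<Rightarrow> ('co, 'cm, 'do, 'dm) ftr \<Rightarrow> bool" where
  "gpushout G A aA B aB C aC D aD F J U V \<longleftrightarrow>
     gcat G A aA \<and> gcat G B aB \<and> gcat G C aC \<and> gcat G D aD \<and>
     gfunctor G A aA B aB F \<and> gfunctor G A aA C aC J \<and>
     gfunctor G B aB D aD U \<and> gfunctor G C aC D aD V \<and>
     ftr_eq A (fcomp U F) (fcomp V J) \<and>
     (\<forall>(E :: ('do, 'dm) cat) aE. gcat G E aE \<longrightarrow> gpo_univ G A aA B aB C aC D aD F J U V E aE)"

end

theory Submission
  imports Defs
begin

text \<open>Because \<open>j\<close> is a sieve with a right adjoint \<open>r\<close> (identity unit) on a cosieve, the pushout of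
  posets can be written down: it is \<open>X\<close> together with \<open>L - j K\<close>, where \<open>x \<le> l\<close> means \<open>x \<le> f k\<close> and
  \<open>j k \<le> l\<close> for some \<open>k\<close>, and then one may take \<open>k = r l\<close>. This poset is a pushout in \<open>Cat\<close>:
  the mediating functor sends \<open>x \<le> l\<close> to \<open>Q (j (r l) \<le> l) \<circ> P (x \<le> f (r l))\<close>, which is functorial
  because \<open>r l\<close> is the largest element of \<open>K\<close> below \<open>l\<close>. Since \<open>r\<close> is equivariant, \<open>G\<close> acts on it
  making it a pushout in \<open>GCat\<close>, so the given pushout \<open>Y\<close> is a retract of it, hence a poset.
  Finally its \<open>H\<close>-fixed points are the same construction applied to the \<open>H\<close>-fixed points of the
  square, which is again of Dwyer type, so the fixed-point square of \<open>Y\<close> is a pushout.\<close>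

section \<open>Posets as categories\<close>

definition leq :: "('o, 'm) cat \<Rightarrow> 'o \<Rightarrow> 'o \<Rightarrow> bool" where
  "leq C a b \<longleftrightarrow> (\<exists>\<phi>\<in>Arr C. Src C \<phi> = a \<and> Tgt C \<phi> = b)"

definition the_arr :: "('o, 'm) cat \<Rightarrow> 'o \<Rightarrow> 'o \<Rightarrow> 'm" where
  "the_arr C a b = (THE \<phi>. \<phi> \<in> Arr C \<and> Src C \<phi> = a \<and> Tgt C \<phi> = b)"

lemma categoryD:
  assumes "category C"
  shows "\<And>f. f \<in> Arr C \<Longrightarrow> Src C f \<in> Obj C" "\<And>f. f \<in> Arr C \<Longrightarrow> Tgt C f \<in> Obj C"
    "\<And>a. a \<in> Obj C \<Longrightarrow> Idt C a \<in> Arr C" "\<And>a. a \<in> Obj C \<Longrightarrow> Src C (Idt C a) = a"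
    "\<And>a. a \<in> Obj C \<Longrightarrow> Tgt C (Idt C a) = a"
    "\<And>f g. f \<in> Arr C \<Longrightarrow> g \<in> Arr C \<Longrightarrow> Tgt C f = Src C g \<Longrightarrow> Cmp C g f \<in> Arr C"
    "\<And>f g. f \<in> Arr C \<Longrightarrow> g \<in> Arr C \<Longrightarrow> Tgt C f = Src C g \<Longrightarrow> Src C (Cmp C g f) = Src C f"
    "\<And>f g. f \<in> Arr C \<Longrightarrow> g \<in> Arr C \<Longrightarrow> Tgt C f = Src C g \<Longrightarrow> Tgt C (Cmp C g f) = Tgt C g"
    "\<And>f. f \<in> Arr C \<Longrightarrow> Cmp C (Idt C (Tgt C f)) f = f"
    "\<And>f. f \<in> Arr C \<Longrightarrow> Cmp C f (Idt C (Src C f)) = f"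
    "\<And>f g h. f \<in> Arr C \<Longrightarrow> g \<in> Arr C \<Longrightarrow> h \<in> Arr C \<Longrightarrow> Tgt C f = Src C g \<Longrightarrow> Tgt C g = Src C h \<Longrightarrow>
        Cmp C h (Cmp C g f) = Cmp C (Cmp C h g) f"
  using assms unfolding category_def by blast+

lemma is_functorD:
  assumes "is_functor C D F"
  shows "\<And>a. a \<in> Obj C \<Longrightarrow> fst F a \<in> Obj D"
    "\<And>f. f \<in> Arr C \<Longrightarrow> snd F f \<in> Arr D" "\<And>f. f \<in> Arr C \<Longrightarrow> Src D (snd F f) = fst F (Src C f)"
    "\<And>f. f \<in> Arr C \<Longrightarrow> Tgt D (snd F f) = fst F (Tgt C f)"
    "\<And>a. a \<in> Obj C \<Longrightarrow> snd F (Idt C a) = Idt D (fst F a)"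
    "\<And>f g. f \<in> Arr C \<Longrightarrow> g \<in> Arr C \<Longrightarrow> Tgt C f = Src C g \<Longrightarrow> snd F (Cmp C g f) = Cmp D (snd F g) (snd F f)"
  using assms unfolding is_functor_def by blast+

lemma is_posetD:
  assumes "is_poset C"
  shows "category C"
    "\<And>f f'. f \<in> Arr C \<Longrightarrow> f' \<in> Arr C \<Longrightarrow> Src C f = Src C f' \<Longrightarrow> Tgt C f = Tgt C f' \<Longrightarrow> f = f'"
    "\<And>f g. f \<in> Arr C \<Longrightarrow> g \<in> Arr C \<Longrightarrow> Src C f = Tgt C g \<Longrightarrow> Tgt C f = Src C g \<Longrightarrow> Src C f = Tgt C f"
  using assms unfolding is_poset_def by blast+

lemma the_arr:
  assumes "is_poset C" "leq C a b"
  shows "the_arr C a b \<in> Arr C" "Src C (the_arr C a b) = a" "Tgt C (the_arr C a b) = b"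
proof -
  obtain \<psi> where \<psi>: "\<psi> \<in> Arr C" "Src C \<psi> = a" "Tgt C \<psi> = b"
    using assms(2) unfolding leq_def by blast
  have "\<exists>!\<phi>. \<phi> \<in> Arr C \<and> Src C \<phi> = a \<and> Tgt C \<phi> = b"
  proof (rule ex1I[of _ \<psi>])
    fix \<phi> assume "\<phi> \<in> Arr C \<and> Src C \<phi> = a \<and> Tgt C \<phi> = b"
    then show "\<phi> = \<psi>" using is_posetD(2)[OF assms(1), of \<phi> \<psi>] \<psi> by simp
  qed (use \<psi> in simp)
  from theI'[OF this] show "the_arr C a b \<in> Arr C" "Src C (the_arr C a b) = a" "Tgt C (the_arr C a b) = b"
    unfolding the_arr_def by auto
qed

lemma the_arr_unique:
  assumes "is_poset C" "\<phi> \<in> Arr C" "Src C \<phi> = a" "Tgt C \<phi> = b"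
  shows "the_arr C a b = \<phi>"
proof -
  have "leq C a b" using assms(2-4) unfolding leq_def by blast
  show ?thesis
    by (rule is_posetD(2)[OF assms(1)]) (use the_arr[OF assms(1) \<open>leq C a b\<close>] assms(2-4) in simp_all)
qed

lemma the_arr_Src_Tgt: "is_poset C \<Longrightarrow> \<phi> \<in> Arr C \<Longrightarrow> the_arr C (Src C \<phi>) (Tgt C \<phi>) = \<phi>"
  by (rule the_arr_unique) simp_all

lemma leq_refl: assumes "is_poset C" "a \<in> Obj C" shows "leq C a a"
  unfolding leq_def using categoryD(3,4,5)[OF is_posetD(1)[OF assms(1)] assms(2)] by blast

lemma the_arr_Idt: assumes "is_poset C" "a \<in> Obj C" shows "the_arr C a a = Idt C a"
  by (rule the_arr_unique[OF assms(1)]) (use categoryD(3,4,5)[OF is_posetD(1)[OF assms(1)] assms(2)] in simp_all)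

lemma leq_Obj: assumes "is_poset C" "leq C a b" shows "a \<in> Obj C \<and> b \<in> Obj C"
  using assms(2) categoryD(1,2)[OF is_posetD(1)[OF assms(1)]] unfolding leq_def by blast

lemma Cmp_the_arr:
  assumes "is_poset C" "leq C a b" "leq C b c"
  shows "Cmp C (the_arr C b c) (the_arr C a b) \<in> Arr C"
    and "Cmp C (the_arr C b c) (the_arr C a b) = the_arr C a c"
proof -
  note P = the_arr[OF assms(1)]
  note cat = categoryD[OF is_posetD(1)[OF assms(1)]]
  have "Cmp C (the_arr C b c) (the_arr C a b) \<in> Arr C" "Src C (Cmp C (the_arr C b c) (the_arr C a b)) = a"
    "Tgt C (Cmp C (the_arr C b c) (the_arr C a b)) = c"
    using cat(6,7,8) P[OF assms(2)] P[OF assms(3)] by auto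
  then show "Cmp C (the_arr C b c) (the_arr C a b) \<in> Arr C"
    and "Cmp C (the_arr C b c) (the_arr C a b) = the_arr C a c"
    using the_arr_unique[OF assms(1), of "Cmp C (the_arr C b c) (the_arr C a b)" a c] by simp_all
qed

lemma leq_trans: assumes "is_poset C" "leq C a b" "leq C b c" shows "leq C a c"
proof -
  note ab = the_arr[OF assms(1,2)] and bc = the_arr[OF assms(1,3)]
  have "Src C (Cmp C (the_arr C b c) (the_arr C a b)) = a" "Tgt C (Cmp C (the_arr C b c) (the_arr C a b)) = c"
    using categoryD(7,8)[OF is_posetD(1)[OF assms(1)] ab(1) bc(1)] ab bc by simp_all
  with Cmp_the_arr(1)[OF assms] show ?thesis unfolding leq_def by (intro bexI conjI)
qed

lemma leq_antisym: assumes "is_poset C" "leq C a b" "leq C b a" shows "a = b"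
proof -
  obtain \<phi> \<psi> where "\<phi> \<in> Arr C" "Src C \<phi> = a" "Tgt C \<phi> = b" "\<psi> \<in> Arr C" "Src C \<psi> = b" "Tgt C \<psi> = a"
    using assms(2,3) unfolding leq_def by blast
  then show ?thesis using is_posetD(3)[OF assms(1), of \<phi> \<psi>] by simp
qed

lemma functor_the_arr:
  assumes "is_poset C" "is_functor C D F" "leq C a b"
  shows "snd F (the_arr C a b) \<in> Arr D" "Src D (snd F (the_arr C a b)) = fst F a"
    "Tgt D (snd F (the_arr C a b)) = fst F b"
  using is_functorD(2,3,4)[OF assms(2)] the_arr[OF assms(1,3)] by auto

lemma functor_leq:
  assumes "is_poset C" "is_functor C D F" "leq C a b"
  shows "leq D (fst F a) (fst F b)"
  using functor_the_arr[OF assms] unfolding leq_def by blast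

lemma functor_the_arr_eq:
  assumes "is_poset C" "is_poset D" "is_functor C D F" "leq C a b"
  shows "snd F (the_arr C a b) = the_arr D (fst F a) (fst F b)"
  using the_arr_unique[OF assms(2) functor_the_arr[OF assms(1,3,4)]] by simp

lemma functor_Cmp_the_arr:
  assumes "is_poset C" "is_functor C D F" "leq C a b" "leq C b c"
  shows "Cmp D (snd F (the_arr C b c)) (snd F (the_arr C a b)) = snd F (the_arr C a c)"
proof -
  have "snd F (Cmp C (the_arr C b c) (the_arr C a b)) = Cmp D (snd F (the_arr C b c)) (snd F (the_arr C a b))"
    using is_functorD(6)[OF assms(2)] the_arr[OF assms(1,3)] the_arr[OF assms(1,4)] by simp
  then show ?thesis using Cmp_the_arr(2)[OF assms(1,3,4)] by simp
qed

section \<open>Thin categories\<close>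

definition thin :: "'o set \<Rightarrow> ('o \<Rightarrow> 'o \<Rightarrow> bool) \<Rightarrow> ('o \<Rightarrow> 'o \<Rightarrow> 'm) \<Rightarrow> ('m \<Rightarrow> 'o) \<Rightarrow> ('m \<Rightarrow> 'o) \<Rightarrow> ('o, 'm) cat" where
  "thin Ob R e s t = \<lparr>Obj = Ob, Arr = {e a b |a b. a \<in> Ob \<and> b \<in> Ob \<and> R a b}, Src = s, Tgt = t,
     Idt = (\<lambda>a. e a a), Cmp = (\<lambda>g h. e (s h) (t g))\<rparr>"

lemma thin_simps:
  "Obj (thin Ob R e s t) = Ob" "Arr (thin Ob R e s t) = {e a b |a b. a \<in> Ob \<and> b \<in> Ob \<and> R a b}"
  "Src (thin Ob R e s t) = s" "Tgt (thin Ob R e s t) = t" "Idt (thin Ob R e s t) = (\<lambda>a. e a a)"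
  "Cmp (thin Ob R e s t) = (\<lambda>g h. e (s h) (t g))"
  unfolding thin_def by simp_all

locale thin_poset =
  fixes Ob :: "'o set" and R :: "'o \<Rightarrow> 'o \<Rightarrow> bool" and e :: "'o \<Rightarrow> 'o \<Rightarrow> 'm" and s t :: "'m \<Rightarrow> 'o"
  assumes refl: "\<And>a. a \<in> Ob \<Longrightarrow> R a a"
    and trans: "\<And>a b c. a \<in> Ob \<Longrightarrow> b \<in> Ob \<Longrightarrow> c \<in> Ob \<Longrightarrow> R a b \<Longrightarrow> R b c \<Longrightarrow> R a c"
    and antisym: "\<And>a b. a \<in> Ob \<Longrightarrow> b \<in> Ob \<Longrightarrow> R a b \<Longrightarrow> R b a \<Longrightarrow> a = b"
    and src_code: "\<And>a b. a \<in> Ob \<Longrightarrow> b \<in> Ob \<Longrightarrow> s (e a b) = a"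
    and tgt_code: "\<And>a b. a \<in> Ob \<Longrightarrow> b \<in> Ob \<Longrightarrow> t (e a b) = b"
begin

lemma code_inj: "a \<in> Ob \<Longrightarrow> b \<in> Ob \<Longrightarrow> a' \<in> Ob \<Longrightarrow> b' \<in> Ob \<Longrightarrow> e a b = e a' b' \<Longrightarrow> a = a' \<and> b = b'"
  by (metis src_code tgt_code)

abbreviation "T \<equiv> thin Ob R e s t"

lemma Arr_thinE:
  assumes "m \<in> Arr T" obtains a b where "a \<in> Ob" "b \<in> Ob" "R a b" "m = e a b"
  using assms by (auto simp: thin_simps)

lemma category: "category T"
  unfolding category_def
proof (intro conjI)
  show "\<forall>f\<in>Arr T. Src T f \<in> Obj T \<and> Tgt T f \<in> Obj T"
    by (auto simp: thin_simps src_code tgt_code)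
  show "\<forall>a\<in>Obj T. Idt T a \<in> Arr T \<and> Src T (Idt T a) = a \<and> Tgt T (Idt T a) = a"
    using refl by (auto simp: thin_simps src_code tgt_code)
  show "\<forall>f\<in>Arr T. \<forall>g\<in>Arr T. Tgt T f = Src T g \<longrightarrow>
        Cmp T g f \<in> Arr T \<and> Src T (Cmp T g f) = Src T f \<and> Tgt T (Cmp T g f) = Tgt T g"
  proof (intro ballI impI)
    fix f g assume f: "f \<in> Arr T" and g: "g \<in> Arr T" and eq: "Tgt T f = Src T g"
    from f obtain a b where ab: "a \<in> Ob" "b \<in> Ob" "R a b" "f = e a b" by (rule Arr_thinE)
    from g obtain c d where cd: "c \<in> Ob" "d \<in> Ob" "R c d" "g = e c d" by (rule Arr_thinE)
    from eq ab cd have "b = c" by (simp add: thin_simps src_code tgt_code)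
    with ab cd trans[of a b d]
    show "Cmp T g f \<in> Arr T \<and> Src T (Cmp T g f) = Src T f \<and> Tgt T (Cmp T g f) = Tgt T g"
      by (auto simp: thin_simps src_code tgt_code)
  qed
  show "\<forall>f\<in>Arr T. Cmp T (Idt T (Tgt T f)) f = f \<and> Cmp T f (Idt T (Src T f)) = f"
    by (auto simp: thin_simps src_code tgt_code)
  show "\<forall>f\<in>Arr T. \<forall>g\<in>Arr T. \<forall>h\<in>Arr T. Tgt T f = Src T g \<and> Tgt T g = Src T h \<longrightarrow>
        Cmp T h (Cmp T g f) = Cmp T (Cmp T h g) f"
    by (auto simp: thin_simps src_code tgt_code)
qed

lemma poset: "is_poset T"
  unfolding is_poset_def
proof (intro conjI category ballI impI)
  fix f f' assume "f \<in> Arr T" "f' \<in> Arr T" "Src T f = Src T f' \<and> Tgt T f = Tgt T f'"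
  then show "f = f'" by (auto simp: thin_simps src_code tgt_code)
next
  fix f g assume "f \<in> Arr T" "g \<in> Arr T" "Src T f = Tgt T g \<and> Tgt T f = Src T g"
  then show "Src T f = Tgt T f" using antisym by (auto simp: thin_simps src_code tgt_code)
qed

end

lemma thin_functor:
  assumes C: "category C" and T: "thin_poset Ob R e s t"
    and ob: "\<And>a. a \<in> Obj C \<Longrightarrow> F a \<in> Ob"
    and le: "\<And>\<phi>. \<phi> \<in> Arr C \<Longrightarrow> R (F (Src C \<phi>)) (F (Tgt C \<phi>))"
  shows "is_functor C (thin Ob R e s t) (F, \<lambda>\<phi>. e (F (Src C \<phi>)) (F (Tgt C \<phi>)))"
proof -
  interpret thin_poset Ob R e s t by (fact T)
  let ?F = "(F, \<lambda>\<phi>. e (F (Src C \<phi>)) (F (Tgt C \<phi>)))"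
  have "snd ?F \<phi> \<in> Arr T \<and> Src T (snd ?F \<phi>) = fst ?F (Src C \<phi>) \<and> Tgt T (snd ?F \<phi>) = fst ?F (Tgt C \<phi>)"
    if \<phi>: "\<phi> \<in> Arr C" for \<phi>
  proof -
    have "F (Src C \<phi>) \<in> Ob" "F (Tgt C \<phi>) \<in> Ob" using \<phi> categoryD(1,2)[OF C] ob by auto
    then show ?thesis using le[OF \<phi>] by (auto simp: thin_simps src_code tgt_code)
  qed
  moreover have "snd ?F (Cmp C g f) = Cmp T (snd ?F g) (snd ?F f)"
    if fg: "f \<in> Arr C" "g \<in> Arr C" "Tgt C f = Src C g" for f g
  proof -
    have "F (Src C f) \<in> Ob" "F (Tgt C f) \<in> Ob" "F (Tgt C g) \<in> Ob"
      using fg categoryD(1,2)[OF C] ob by auto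
    then show ?thesis using categoryD(7,8)[OF C fg] fg(3) by (simp add: thin_simps src_code tgt_code)
  qed
  ultimately show ?thesis
    unfolding is_functor_def using ob categoryD(4,5)[OF C] by (simp add: thin_simps)
qed

section \<open>Functors, restrictions and fixed points\<close>

lemma ftr_eqD:
  "ftr_eq C F F' \<Longrightarrow> x \<in> Obj C \<Longrightarrow> fst F x = fst F' x"
  "ftr_eq C F F' \<Longrightarrow> \<phi> \<in> Arr C \<Longrightarrow> snd F \<phi> = snd F' \<phi>"
  unfolding ftr_eq_def by auto

lemma ftr_eq_sym: "ftr_eq C F1 F2 \<Longrightarrow> ftr_eq C F2 F1"
  unfolding ftr_eq_def by simp

lemma ftr_eq_trans: "ftr_eq C F1 F2 \<Longrightarrow> ftr_eq C F2 F3 \<Longrightarrow> ftr_eq C F1 F3"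
  unfolding ftr_eq_def by simp

lemma ftr_eq_fcomp_left: "ftr_eq C V V' \<Longrightarrow> ftr_eq C (fcomp F V) (fcomp F V')"
  unfolding ftr_eq_def fcomp_def by simp

lemma ftr_eq_fcomp_assoc:
  "ftr_eq B (fcomp F U) U1 \<Longrightarrow> ftr_eq B (fcomp F' U1) U2 \<Longrightarrow> ftr_eq B (fcomp (fcomp F' F) U) U2"
  unfolding ftr_eq_def fcomp_def by simp

lemma ftr_eq_subcat: "ftr_eq C F F' \<Longrightarrow> Obj C' \<subseteq> Obj C \<Longrightarrow> Arr C' \<subseteq> Arr C \<Longrightarrow> ftr_eq C' F F'"
  unfolding ftr_eq_def by blast

lemma is_functor_fcomp: "is_functor A B F \<Longrightarrow> is_functor B C F' \<Longrightarrow> is_functor A C (fcomp F' F)"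
  unfolding is_functor_def fcomp_def by auto

lemma is_functor_idF: "category C \<Longrightarrow> is_functor C C idF"
  unfolding is_functor_def idF_def using categoryD by simp

lemma cat_update_simps:
  "Obj (C\<lparr>Obj := A, Arr := B\<rparr>) = A" "Arr (C\<lparr>Obj := A, Arr := B\<rparr>) = B"
  "Src (C\<lparr>Obj := A, Arr := B\<rparr>) = Src C" "Tgt (C\<lparr>Obj := A, Arr := B\<rparr>) = Tgt C"
  "Idt (C\<lparr>Obj := A, Arr := B\<rparr>) = Idt C" "Cmp (C\<lparr>Obj := A, Arr := B\<rparr>) = Cmp C"
  by simp_all

lemma subcat_simps:
  "Obj (subcat C Ob M) = Ob" "Arr (subcat C Ob M) = M" "Src (subcat C Ob M) = Src C"
  "Tgt (subcat C Ob M) = Tgt C" "Idt (subcat C Ob M) = Idt C" "Cmp (subcat C Ob M) = Cmp C"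
  unfolding subcat_def by simp_all

lemma fixcat_simps:
  "Obj (fixcat C act H) = {a \<in> Obj C. \<forall>h\<in>H. fst (act h) a = a}"
  "Arr (fixcat C act H) = {f \<in> Arr C. \<forall>h\<in>H. snd (act h) f = f}"
  "Src (fixcat C act H) = Src C" "Tgt (fixcat C act H) = Tgt C"
  "Idt (fixcat C act H) = Idt C" "Cmp (fixcat C act H) = Cmp C"
  unfolding fixcat_def by simp_all

lemma fixcat_subset: "Obj (fixcat C act H) \<subseteq> Obj C" "Arr (fixcat C act H) \<subseteq> Arr C"
  unfolding fixcat_simps by blast+

lemma category_restrict:
  assumes C: "category C" and "is_subcat C Ob M"
  shows "category (C\<lparr>Obj := Ob, Arr := M\<rparr>)"
proof -
  have sub: "Ob \<subseteq> Obj C" "M \<subseteq> Arr C"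
    and cl: "\<And>f. f \<in> M \<Longrightarrow> Src C f \<in> Ob \<and> Tgt C f \<in> Ob" "\<And>a. a \<in> Ob \<Longrightarrow> Idt C a \<in> M"
      "\<And>f g. f \<in> M \<Longrightarrow> g \<in> M \<Longrightarrow> Tgt C f = Src C g \<Longrightarrow> Cmp C g f \<in> M"
    using assms(2) unfolding is_subcat_def by blast+
  show ?thesis
    unfolding category_def cat_update_simps
    using categoryD[OF C] sub cl by (simp add: subset_iff)
qed

lemma is_poset_restrict:
  assumes "is_poset C" "category (C\<lparr>Obj := Ob, Arr := M\<rparr>)" "M \<subseteq> Arr C"
  shows "is_poset (C\<lparr>Obj := Ob, Arr := M\<rparr>)"
  using assms is_posetD[OF assms(1)] unfolding is_poset_def cat_update_simps by blast

lemma is_subcat_fixcat: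
  assumes C: "category C" and F: "\<And>h. h \<in> H \<Longrightarrow> is_functor C C (act h)"
  shows "is_subcat C (Obj (fixcat C act H)) (Arr (fixcat C act H))"
proof -
  have "fst (act h) (Src C f) = Src C f \<and> fst (act h) (Tgt C f) = Tgt C f"
    if "f \<in> Arr C" "snd (act h) f = f" "h \<in> H" for f h
    using is_functorD(3,4)[OF F[OF that(3)] that(1)] that(2) by simp
  moreover have "snd (act h) (Idt C a) = Idt C a" if "a \<in> Obj C" "fst (act h) a = a" "h \<in> H" for a h
    using is_functorD(5)[OF F[OF that(3)] that(1)] that(2) by simp
  moreover have "snd (act h) (Cmp C g f) = Cmp C g f"
    if "f \<in> Arr C" "g \<in> Arr C" "Tgt C f = Src C g" "snd (act h) f = f" "snd (act h) g = g" "h \<in> H"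
    for f g h
    using is_functorD(6)[OF F[OF that(6)] that(1-3)] that(4,5) by simp
  ultimately show ?thesis
    unfolding is_subcat_def fixcat_simps using categoryD(1,2,3,6)[OF C] by auto
qed

lemma category_fixcat:
  assumes C: "category C" and F: "\<And>h. h \<in> H \<Longrightarrow> is_functor C C (act h)"
  shows "category (fixcat C act H)"
  using category_restrict[OF C is_subcat_fixcat[OF C F]] unfolding fixcat_def by simp

lemma is_poset_fixcat:
  assumes C: "is_poset C" and F: "\<And>h. h \<in> H \<Longrightarrow> is_functor C C (act h)"
  shows "is_poset (fixcat C act H)"
  using is_poset_restrict[OF C category_fixcat[OF is_posetD(1)[OF C] F, unfolded fixcat_def]]
  unfolding fixcat_def by auto

lemma is_functor_fixcat:
  assumes F: "is_functor C D F" and eq: "\<And>h. h \<in> H \<Longrightarrow> ftr_eq C (fcomp F (a h)) (fcomp (b h) F)"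
  shows "is_functor (fixcat C a H) (fixcat D b H) F"
proof -
  have "fst (b h) (fst F x) = fst F x" if "x \<in> Obj C" "\<forall>h\<in>H. fst (a h) x = x" "h \<in> H" for x h
    using ftr_eqD(1)[OF eq, of h x] that unfolding fcomp_def by auto
  moreover have "snd (b h) (snd F \<phi>) = snd F \<phi>" if "\<phi> \<in> Arr C" "\<forall>h\<in>H. snd (a h) \<phi> = \<phi>" "h \<in> H" for \<phi> h
    using ftr_eqD(2)[OF eq, of h \<phi>] that unfolding fcomp_def by auto
  ultimately show ?thesis
    using is_functorD[OF F] unfolding is_functor_def fixcat_simps by simp
qed

lemma leq_fixcat:
  assumes C: "is_poset C" and F: "\<And>h. h \<in> H \<Longrightarrow> is_functor C C (act h)"
    and x: "x \<in> Obj (fixcat C act H)" and y: "y \<in> Obj (fixcat C act H)"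
  shows "leq (fixcat C act H) x y \<longleftrightarrow> leq C x y"
proof
  assume "leq (fixcat C act H) x y"
  then show "leq C x y" unfolding leq_def fixcat_simps by blast
next
  assume l: "leq C x y"
  note A = the_arr[OF C l]
  have "snd (act h) (the_arr C x y) = the_arr C x y" if h: "h \<in> H" for h
    by (rule is_posetD(2)[OF C]) (use is_functorD(2,3,4)[OF F[OF h] A(1)] A x y h in \<open>simp_all add: fixcat_simps\<close>)
  then have "the_arr C x y \<in> Arr (fixcat C act H)" using A(1) by (simp add: fixcat_simps)
  then show "leq (fixcat C act H) x y" unfolding leq_def fixcat_simps(3,4) using A(2,3) by blast
qed

lemma gcatD:
  assumes "gcat G C act"
  shows "category C" "\<And>g. g \<in> carrier G \<Longrightarrow> is_functor C C (act g)"
    "\<And>x. x \<in> Obj C \<Longrightarrow> fst (act \<one>\<^bsub>G\<^esub>) x = x" "\<And>\<phi>. \<phi> \<in> Arr C \<Longrightarrow> snd (act \<one>\<^bsub>G\<^esub>) \<phi> = \<phi>"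
    "\<And>g h x. g \<in> carrier G \<Longrightarrow> h \<in> carrier G \<Longrightarrow> x \<in> Obj C \<Longrightarrow>
       fst (act (g \<otimes>\<^bsub>G\<^esub> h)) x = fst (act g) (fst (act h) x)"
    "\<And>g h \<phi>. g \<in> carrier G \<Longrightarrow> h \<in> carrier G \<Longrightarrow> \<phi> \<in> Arr C \<Longrightarrow>
       snd (act (g \<otimes>\<^bsub>G\<^esub> h)) \<phi> = snd (act g) (snd (act h) \<phi>)"
  using assms unfolding gcat_def ftr_eq_def fcomp_def idF_def by auto

lemma gcat_inv_act:
  assumes "group G" "gcat G C act" "g \<in> carrier G" "x \<in> Obj C"
  shows "fst (act (inv\<^bsub>G\<^esub> g)) (fst (act g) x) = x"
  using gcatD(3,5)[OF assms(2)] assms group.inv_closed group.l_inv by metis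

lemma gfunctorD:
  assumes "gfunctor G C a D b F"
  shows "is_functor C D F"
    "\<And>g x. g \<in> carrier G \<Longrightarrow> x \<in> Obj C \<Longrightarrow> fst F (fst (a g) x) = fst (b g) (fst F x)"
    "\<And>g \<phi>. g \<in> carrier G \<Longrightarrow> \<phi> \<in> Arr C \<Longrightarrow> snd F (snd (a g) \<phi>) = snd (b g) (snd F \<phi>)"
  using assms unfolding gfunctor_def ftr_eq_def fcomp_def by auto

lemma gfunctor_fcomp:
  assumes "gfunctor G A a B b F" "gfunctor G B b C c F'"
  shows "gfunctor G A a C c (fcomp F' F)"
  using is_functor_fcomp[OF gfunctorD(1)[OF assms(1)] gfunctorD(1)[OF assms(2)]]
    gfunctorD(2,3)[OF assms(1)] gfunctorD(2,3)[OF assms(2)]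
    is_functorD(1,2)[OF gfunctorD(1)[OF assms(1)]]
  unfolding gfunctor_def ftr_eq_def fcomp_def by simp

lemma gfunctor_idF: "gcat G C a \<Longrightarrow> gfunctor G C a C a idF"
  unfolding gfunctor_def ftr_eq_def fcomp_def using is_functor_idF gcatD(1) by (auto simp: idF_def)

lemma is_functor_fixcat_gfunctor:
  "gfunctor G C a D b F \<Longrightarrow> H \<subseteq> carrier G \<Longrightarrow> is_functor (fixcat C a H) (fixcat D b H) F"
  by (rule is_functor_fixcat) (auto simp: gfunctor_def)

section \<open>Pushouts\<close>

lemma po_univ_transfer:
  assumes po: "po_univ A B C D F J U V E"
    and Phi: "is_functor D D' Phi" and Psi: "is_functor D' D Psi"
    and id: "ftr_eq D' (fcomp Phi Psi) idF"
    and U1: "ftr_eq B (fcomp Psi U') U" and V1: "ftr_eq C (fcomp Psi V') V"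
    and U2: "ftr_eq B (fcomp Phi U) U'" and V2: "ftr_eq C (fcomp Phi V) V'"
  shows "po_univ A B C D' F J U' V' E"
  unfolding po_univ_def
proof (intro allI impI)
  fix P Q assume PQ: "is_functor B E P \<and> is_functor C E Q \<and> ftr_eq A (fcomp P F) (fcomp Q J)"
  from po PQ obtain W where W: "is_functor D E W" "ftr_eq B (fcomp W U) P" "ftr_eq C (fcomp W V) Q"
    and W_unique: "\<And>W'. is_functor D E W' \<Longrightarrow> ftr_eq B (fcomp W' U) P \<Longrightarrow> ftr_eq C (fcomp W' V) Q \<Longrightarrow>
      ftr_eq D W W'"
    unfolding po_univ_def by blast
  have "ftr_eq D' (fcomp W Psi) W'"
    if W': "is_functor D' E W'" "ftr_eq B (fcomp W' U') P" "ftr_eq C (fcomp W' V') Q" for W'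
  proof -
    have WW': "ftr_eq D W (fcomp W' Phi)"
      by (rule W_unique[OF is_functor_fcomp[OF Phi W'(1)] ftr_eq_fcomp_assoc[OF U2 W'(2)]
            ftr_eq_fcomp_assoc[OF V2 W'(3)]])
    show ?thesis
      unfolding ftr_eq_def
    proof (intro conjI ballI)
      fix y assume y: "y \<in> Obj D'"
      have "fst Phi (fst Psi y) = y" using ftr_eqD(1)[OF id y] by (simp add: fcomp_def idF_def)
      then show "fst (fcomp W Psi) y = fst W' y"
        using ftr_eqD(1)[OF WW' is_functorD(1)[OF Psi y]] by (simp add: fcomp_def)
    next
      fix y assume y: "y \<in> Arr D'"
      have "snd Phi (snd Psi y) = y" using ftr_eqD(2)[OF id y] by (simp add: fcomp_def idF_def)
      then show "snd (fcomp W Psi) y = snd W' y"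
        using ftr_eqD(2)[OF WW' is_functorD(2)[OF Psi y]] by (simp add: fcomp_def)
    qed
  qed
  then show "\<exists>W. is_functor D' E W \<and> ftr_eq B (fcomp W U') P \<and> ftr_eq C (fcomp W V') Q \<and>
      (\<forall>W'. is_functor D' E W' \<and> ftr_eq B (fcomp W' U') P \<and> ftr_eq C (fcomp W' V') Q \<longrightarrow> ftr_eq D' W W')"
    using is_functor_fcomp[OF Psi W(1)] ftr_eq_fcomp_assoc[OF U1 W(2)] ftr_eq_fcomp_assoc[OF V1 W(3)] by blast
qed

text \<open>\<open>gpushout\<close> only tests against \<open>G\<close>-categories of the type of \<open>D\<close>, hence the type of \<open>D'\<close>.\<close>

lemma gpushout_retraction:
  fixes D D' :: "('do, 'dm) cat"
  assumes D: "gpushout G A aA B aB C aC D aD F J U V"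
    and gD': "gcat G D' aD'" and U': "gfunctor G B aB D' aD' U'" and V': "gfunctor G C aC D' aD' V'"
    and comm': "ftr_eq A (fcomp U' F) (fcomp V' J)"
    and univ': "gpo_univ G A aA B aB C aC D' aD' F J U' V' D aD"
  obtains Psi Phi where "gfunctor G D aD D' aD' Psi" "gfunctor G D' aD' D aD Phi"
    "ftr_eq D (fcomp Phi Psi) idF"
    "ftr_eq B (fcomp Psi U) U'" "ftr_eq C (fcomp Psi V) V'"
    "ftr_eq B (fcomp Phi U') U" "ftr_eq C (fcomp Phi V') V"
proof -
  have gD: "gcat G D aD" and gU: "gfunctor G B aB D aD U" and gV: "gfunctor G C aC D aD V"
    and comm: "ftr_eq A (fcomp U F) (fcomp V J)"
    and univ: "\<And>(E :: ('do, 'dm) cat) aE. gcat G E aE \<Longrightarrow> gpo_univ G A aA B aB C aC D aD F J U V E aE"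
    using D unfolding gpushout_def by blast+
  obtain Psi where Psi: "gfunctor G D aD D' aD' Psi" "ftr_eq B (fcomp Psi U) U'" "ftr_eq C (fcomp Psi V) V'"
    using univ[OF gD'] U' V' comm' unfolding gpo_univ_def by blast
  obtain Phi where Phi: "gfunctor G D' aD' D aD Phi" "ftr_eq B (fcomp Phi U') U" "ftr_eq C (fcomp Phi V') V"
    using univ' gU gV comm unfolding gpo_univ_def by blast
  obtain W0 where W0: "\<And>W'. gfunctor G D aD D aD W' \<and> ftr_eq B (fcomp W' U) U \<and> ftr_eq C (fcomp W' V) V \<Longrightarrow>
      ftr_eq D W0 W'"
    using univ[OF gD] gU gV comm unfolding gpo_univ_def by blast
  have "ftr_eq D W0 (fcomp Phi Psi)"
    using W0 gfunctor_fcomp[OF Psi(1) Phi(1)] ftr_eq_fcomp_assoc[OF Psi(2) Phi(2)]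
      ftr_eq_fcomp_assoc[OF Psi(3) Phi(3)] by blast
  moreover have "ftr_eq D W0 idF"
    by (rule W0) (use gfunctor_idF[OF gD] in \<open>simp add: ftr_eq_def fcomp_def idF_def\<close>)
  ultimately have "ftr_eq D (fcomp Phi Psi) idF" using ftr_eq_trans ftr_eq_sym by blast
  then show thesis using that Psi Phi by blast
qed

lemma is_poset_if_retract:
  assumes D: "category D" and D': "is_poset D'" and Psi: "is_functor D D' Psi"
    and id: "ftr_eq D (fcomp Phi Psi) idF"
  shows "is_poset D"
  unfolding is_poset_def
proof (intro conjI D ballI impI)
  fix a a' assume a: "a \<in> Arr D" "a' \<in> Arr D" and e: "Src D a = Src D a' \<and> Tgt D a = Tgt D a'"
  have "snd Psi a = snd Psi a'"
    by (rule is_posetD(2)[OF D']) (use is_functorD(2,3,4)[OF Psi] a e in simp_all)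
  then show "a = a'" using ftr_eqD(2)[OF id a(1)] ftr_eqD(2)[OF id a(2)] by (simp add: fcomp_def idF_def)
next
  fix a b assume a: "a \<in> Arr D" "b \<in> Arr D" and e: "Src D a = Tgt D b \<and> Tgt D a = Src D b"
  have "Src D' (snd Psi a) = Tgt D' (snd Psi a)"
    by (rule is_posetD(3)[OF D', of _ "snd Psi b"]) (use is_functorD(2,3,4)[OF Psi] a e in simp_all)
  then have "fst Psi (Src D a) = fst Psi (Tgt D a)" using is_functorD(3,4)[OF Psi a(1)] by simp
  then show "Src D a = Tgt D a"
    using ftr_eqD(1)[OF id categoryD(1)[OF D a(1)]] ftr_eqD(1)[OF id categoryD(2)[OF D a(1)]]
    by (simp add: fcomp_def idF_def)
qed

section \<open>The explicit pushout\<close>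

text \<open>An object of the explicit pushout is a singleton \<open>{Inl l}\<close> or \<open>{Inr x}\<close>; the arrow \<open>a \<le> b\<close> is
  coded by the identity arrows of \<open>a\<close> and \<open>b\<close>, from which source and target are recovered with \<open>Src\<close>.\<close>

definition idt_code :: "('lo, 'lm) cat \<Rightarrow> ('xo, 'xm) cat \<Rightarrow> ('lo + 'xo) set \<Rightarrow> 'lm + 'xm" where
  "idt_code L X a = (case the_elem a of Inl l \<Rightarrow> Inl (Idt L l) | Inr x \<Rightarrow> Inr (Idt X x))"

definition code_obj :: "('lo, 'lm) cat \<Rightarrow> ('xo, 'xm) cat \<Rightarrow> 'lm + 'xm \<Rightarrow> ('lo + 'xo) set" where
  "code_obj L X i = (case i of Inl u \<Rightarrow> {Inl (Src L u)} | Inr u \<Rightarrow> {Inr (Src X u)})"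

definition le_code :: "('lo, 'lm) cat \<Rightarrow> ('xo, 'xm) cat \<Rightarrow> ('lo + 'xo) set \<Rightarrow> ('lo + 'xo) set \<Rightarrow> ('lm + 'xm) list set"
  where "le_code L X a b = {[idt_code L X a, idt_code L X b]}"

definition le_code_src :: "('lo, 'lm) cat \<Rightarrow> ('xo, 'xm) cat \<Rightarrow> ('lm + 'xm) list set \<Rightarrow> ('lo + 'xo) set" where
  "le_code_src L X m = code_obj L X (hd (the_elem m))"

definition le_code_tgt :: "('lo, 'lm) cat \<Rightarrow> ('xo, 'xm) cat \<Rightarrow> ('lm + 'xm) list set \<Rightarrow> ('lo + 'xo) set" where
  "le_code_tgt L X m = code_obj L X (last (the_elem m))"

definition po_obj :: "('ko, 'km) cat \<Rightarrow> ('lo, 'lm) cat \<Rightarrow> ('xo, 'xm) cat \<Rightarrow> ('ko, 'km, 'lo, 'lm) ftr \<Rightarrow> ('lo + 'xo) set set"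
  where "po_obj K L X j = (\<lambda>z. {z}) ` (Inl ` (Obj L - fst j ` Obj K) \<union> Inr ` Obj X)"

definition po_le :: "('ko, 'km) cat \<Rightarrow> ('lo, 'lm) cat \<Rightarrow> ('xo, 'xm) cat \<Rightarrow> ('ko, 'km, 'xo, 'xm) ftr
    \<Rightarrow> ('ko, 'km, 'lo, 'lm) ftr \<Rightarrow> ('lo + 'xo) set \<Rightarrow> ('lo + 'xo) set \<Rightarrow> bool" where
  "po_le K L X f j a b = (case (the_elem a, the_elem b) of
      (Inr x, Inr x') \<Rightarrow> leq X x x'
    | (Inr x, Inl l) \<Rightarrow> (\<exists>k\<in>Obj K. leq X x (fst f k) \<and> leq L (fst j k) l)
    | (Inl l, Inl l') \<Rightarrow> leq L l l'
    | (Inl _, Inr _) \<Rightarrow> False)"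

definition po_cat :: "('ko, 'km) cat \<Rightarrow> ('lo, 'lm) cat \<Rightarrow> ('xo, 'xm) cat \<Rightarrow> ('ko, 'km, 'xo, 'xm) ftr
    \<Rightarrow> ('ko, 'km, 'lo, 'lm) ftr \<Rightarrow> (('lo + 'xo) set, ('lm + 'xm) list set) cat" where
  "po_cat K L X f j = thin (po_obj K L X j) (po_le K L X f j) (le_code L X) (le_code_src L X) (le_code_tgt L X)"

definition po_inX :: "('lo, 'lm) cat \<Rightarrow> ('xo, 'xm) cat \<Rightarrow> ('xo, 'xm, ('lo + 'xo) set, ('lm + 'xm) list set) ftr" where
  "po_inX L X = ((\<lambda>x. {Inr x}), (\<lambda>\<phi>. le_code L X {Inr (Src X \<phi>)} {Inr (Tgt X \<phi>)}))"

definition po_inL_obj :: "('ko, 'km) cat \<Rightarrow> ('ko, 'km, 'xo, 'xm) ftr \<Rightarrow> ('ko, 'km, 'lo, 'lm) ftr \<Rightarrow> 'lo \<Rightarrow> ('lo + 'xo) set"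
  where "po_inL_obj K f j l =
    (if l \<in> fst j ` Obj K then {Inr (fst f (the_inv_into (Obj K) (fst j) l))} else {Inl l})"

definition po_inL :: "('ko, 'km) cat \<Rightarrow> ('lo, 'lm) cat \<Rightarrow> ('xo, 'xm) cat \<Rightarrow> ('ko, 'km, 'xo, 'xm) ftr
    \<Rightarrow> ('ko, 'km, 'lo, 'lm) ftr \<Rightarrow> ('lo, 'lm, ('lo + 'xo) set, ('lm + 'xm) list set) ftr" where
  "po_inL K L X f j =
    (po_inL_obj K f j, (\<lambda>\<phi>. le_code L X (po_inL_obj K f j (Src L \<phi>)) (po_inL_obj K f j (Tgt L \<phi>))))"

lemma idt_code_simps: "idt_code L X {Inl l} = Inl (Idt L l)" "idt_code L X {Inr x} = Inr (Idt X x)"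
  unfolding idt_code_def by simp_all

lemma po_le_simps:
  "po_le K L X f j {Inr x} {Inr x'} = leq X x x'"
  "po_le K L X f j {Inr x} {Inl l} = (\<exists>k\<in>Obj K. leq X x (fst f k) \<and> leq L (fst j k) l)"
  "po_le K L X f j {Inl l} {Inl l'} = leq L l l'"
  "po_le K L X f j {Inl l} {Inr x} = False"
  unfolding po_le_def by simp_all

lemma po_obj_iff:
  "a \<in> po_obj K L X j \<longleftrightarrow>
    (\<exists>l. a = {Inl l} \<and> l \<in> Obj L \<and> l \<notin> fst j ` Obj K) \<or> (\<exists>x. a = {Inr x} \<and> x \<in> Obj X)"
  unfolding po_obj_def by blast

lemma po_objE:
  assumes "a \<in> po_obj K L X j"
  obtains (inl) l where "a = {Inl l}" "l \<in> Obj L" "l \<notin> fst j ` Obj K"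
    | (inr) x where "a = {Inr x}" "x \<in> Obj X"
  using assms unfolding po_obj_iff by blast

lemma po_objI:
  "l \<in> Obj L \<Longrightarrow> l \<notin> fst j ` Obj K \<Longrightarrow> {Inl l} \<in> po_obj K L X j"
  "x \<in> Obj X \<Longrightarrow> {Inr x} \<in> po_obj K L X j"
  unfolding po_obj_iff by blast+

text \<open>For a Dwyer map, \<open>\<rho>\<close> is the right adjoint of \<open>j\<close>.\<close>

locale dwyer_square =
  fixes K :: "('ko,'km) cat" and L :: "('lo,'lm) cat" and X :: "('xo,'xm) cat"
    and f :: "('ko,'km,'xo,'xm) ftr" and j :: "('ko,'km,'lo,'lm) ftr" and \<rho> :: "'lo \<Rightarrow> 'ko"
  assumes posK: "is_poset K" and posL: "is_poset L" and posX: "is_poset X"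
    and funf: "is_functor K X f" and funj: "is_functor K L j"
    and injj: "inj_on (fst j) (Obj K)"
    and sieve: "\<And>\<phi>. \<phi> \<in> Arr L \<Longrightarrow> Tgt L \<phi> \<in> fst j ` Obj K \<Longrightarrow> Src L \<phi> \<in> fst j ` Obj K"
    and rho: "\<And>l k. l \<in> Obj L \<Longrightarrow> k \<in> Obj K \<Longrightarrow> leq L (fst j k) l \<Longrightarrow>
                 \<rho> l \<in> Obj K \<and> leq L (fst j (\<rho> l)) l \<and> leq K k (\<rho> l)"
begin

abbreviation "P \<equiv> po_cat K L X f j"
abbreviation "Ob \<equiv> po_obj K L X j"
abbreviation "R \<equiv> po_le K L X f j"

lemmas catK = is_posetD(1)[OF posK] and catL = is_posetD(1)[OF posL] and catX = is_posetD(1)[OF posX]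

lemma j_Obj: "k \<in> Obj K \<Longrightarrow> fst j k \<in> Obj L" using is_functorD(1)[OF funj] by blast
lemma f_Obj: "k \<in> Obj K \<Longrightarrow> fst f k \<in> Obj X" using is_functorD(1)[OF funf] by blast

lemma j_inv: "k \<in> Obj K \<Longrightarrow> the_inv_into (Obj K) (fst j) (fst j k) = k"
  by (rule the_inv_into_f_f[OF injj])

lemma code_obj_idt_code: "a \<in> Ob \<Longrightarrow> code_obj L X (idt_code L X a) = a"
  by (erule po_objE) (use categoryD(4)[OF catL] categoryD(4)[OF catX] in \<open>simp_all add: idt_code_simps code_obj_def\<close>)

lemma src_le_code: "a \<in> Ob \<Longrightarrow> le_code_src L X (le_code L X a b) = a"
  unfolding le_code_src_def le_code_def by (simp add: code_obj_idt_code)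
lemma tgt_le_code: "b \<in> Ob \<Longrightarrow> le_code_tgt L X (le_code L X a b) = b"
  unfolding le_code_tgt_def le_code_def by (simp add: code_obj_idt_code)

lemma po_le_Inr_Inl_rho:
  assumes x: "x \<in> Obj X" and l: "l \<in> Obj L" and r: "R {Inr x} {Inl l}"
  shows "\<rho> l \<in> Obj K" "leq L (fst j (\<rho> l)) l" "leq X x (fst f (\<rho> l))"
proof -
  obtain k where k: "k \<in> Obj K" "leq X x (fst f k)" "leq L (fst j k) l" using r unfolding po_le_simps by blast
  note r1 = rho[OF l k(1) k(3)]
  show "\<rho> l \<in> Obj K" "leq L (fst j (\<rho> l)) l" using r1 by simp_all
  have "leq X (fst f k) (fst f (\<rho> l))" using functor_leq[OF posK funf] r1 by blast
  thus "leq X x (fst f (\<rho> l))" using leq_trans[OF posX k(2)] by blast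
qed

lemma j_reflects_leq:
  assumes k: "k \<in> Obj K" "k' \<in> Obj K" and le: "leq L (fst j k) (fst j k')"
  shows "leq K k k'"
proof -
  have jk': "fst j k' \<in> Obj L" using j_Obj k(2) .
  note r1 = rho[OF jk' k(1) le]
  note r2 = rho[OF jk' k(2) leq_refl[OF posL jk']]
  have "leq L (fst j k') (fst j (\<rho> (fst j k')))" using functor_leq[OF posK funj] r2 by blast
  hence "fst j k' = fst j (\<rho> (fst j k'))" using leq_antisym[OF posL] r2 by blast
  hence "k' = \<rho> (fst j k')" using injj k(2) r2 unfolding inj_on_def by blast
  thus ?thesis using r1 by simp
qed

lemma po_le_refl: "a \<in> Ob \<Longrightarrow> R a a"
  by (erule po_objE) (use leq_refl[OF posL] leq_refl[OF posX] in \<open>simp_all add: po_le_simps\<close>)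

lemma po_le_trans:
  assumes a: "a \<in> Ob" and b: "b \<in> Ob" and c: "c \<in> Ob" and ab: "R a b" and bc: "R b c"
  shows "R a c"
  using a
proof (cases rule: po_objE)
  case L: (inl l)
  then obtain l' where l': "b = {Inl l'}" using ab b by (cases rule: po_objE[OF b]) (auto simp: po_le_simps)
  then obtain l'' where l'': "c = {Inl l''}" using bc c by (cases rule: po_objE[OF c]) (auto simp: po_le_simps)
  show ?thesis using ab bc L l' l'' leq_trans[OF posL] by (simp add: po_le_simps)
next
  case X: (inr x)
  show ?thesis
    using b
  proof (cases rule: po_objE)
    case L: (inl l)
    then obtain l'' where l'': "c = {Inl l''}" using bc c by (cases rule: po_objE[OF c]) (auto simp: po_le_simps)
    from ab X L obtain k where k: "k \<in> Obj K" "leq X x (fst f k)" "leq L (fst j k) l"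
      by (auto simp: po_le_simps)
    have "leq L l l''" using bc L l'' by (simp add: po_le_simps)
    then have "leq L (fst j k) l''" using leq_trans[OF posL k(3)] by blast
    then show ?thesis using X l'' k by (auto simp: po_le_simps)
  next
    case X2: (inr x')
    have xx': "leq X x x'" using ab X X2 by (simp add: po_le_simps)
    show ?thesis
      using c
    proof (cases rule: po_objE)
      case L: (inl l)
      from bc X2 L obtain k where k: "k \<in> Obj K" "leq X x' (fst f k)" "leq L (fst j k) l"
        by (auto simp: po_le_simps)
      have "leq X x (fst f k)" using leq_trans[OF posX xx' k(2)] .
      then show ?thesis using X L k by (auto simp: po_le_simps)
    next
      case X3: (inr x'')
      have "leq X x' x''" using bc X2 X3 by (simp add: po_le_simps)
      then show ?thesis using X X3 leq_trans[OF posX xx'] by (simp add: po_le_simps)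
    qed
  qed
qed

lemma po_le_antisym:
  assumes a: "a \<in> Ob" and b: "b \<in> Ob" and ab: "R a b" and ba: "R b a"
  shows "a = b"
  using a
proof (cases rule: po_objE)
  case L: (inl l)
  then obtain l' where l': "b = {Inl l'}" using ab b by (cases rule: po_objE[OF b]) (auto simp: po_le_simps)
  show ?thesis using ab ba L l' leq_antisym[OF posL] by (simp add: po_le_simps)
next
  case X: (inr x)
  then obtain x' where x': "b = {Inr x'}" using ba b by (cases rule: po_objE[OF b]) (auto simp: po_le_simps)
  show ?thesis using ab ba X x' leq_antisym[OF posX] by (simp add: po_le_simps)
qed

lemma thin_poset_po: "thin_poset Ob R (le_code L X) (le_code_src L X) (le_code_tgt L X)"
  by unfold_locales (fact po_le_refl po_le_trans po_le_antisym | simp add: src_le_code tgt_le_code)+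

lemma poset_P: "is_poset P" unfolding po_cat_def by (rule thin_poset.poset[OF thin_poset_po])
lemma category_P: "category P" by (rule is_posetD(1)[OF poset_P])

lemma P_simps: "Obj P = Ob" "Arr P = {le_code L X a b |a b. a\<in>Ob \<and> b\<in>Ob \<and> R a b}"
  "Src P = le_code_src L X" "Tgt P = le_code_tgt L X" "Idt P = (\<lambda>a. le_code L X a a)"
  "Cmp P = (\<lambda>g h. le_code L X (le_code_src L X h) (le_code_tgt L X g))"
  unfolding po_cat_def thin_simps by simp_all

lemma Arr_PE: assumes "m \<in> Arr P" obtains a b where "a\<in>Ob" "b\<in>Ob" "R a b" "m = le_code L X a b"
  using assms unfolding P_simps by blast

lemma Arr_PI: "a\<in>Ob \<Longrightarrow> b\<in>Ob \<Longrightarrow> R a b \<Longrightarrow> le_code L X a b \<in> Arr P"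
  unfolding P_simps by blast

lemma po_inL_obj_j: "k \<in> Obj K \<Longrightarrow> po_inL_obj K f j (fst j k) = {Inr (fst f k)}"
  unfolding po_inL_obj_def using j_inv by auto
lemma po_inL_obj_not_j: "l \<notin> fst j ` Obj K \<Longrightarrow> po_inL_obj K f j l = {Inl l}"
  unfolding po_inL_obj_def by auto

lemma po_inL_obj_in: "l \<in> Obj L \<Longrightarrow> po_inL_obj K f j l \<in> Ob"
proof (cases "l \<in> fst j ` Obj K")
  case True then obtain k where "k \<in> Obj K" "l = fst j k" by blast
  thus ?thesis using po_inL_obj_j f_Obj po_objI(2) by metis
next
  case False assume "l \<in> Obj L" thus ?thesis using po_inL_obj_not_j[OF False] po_objI(1) False by metis
qed

lemma po_le_po_inL_obj: assumes le: "leq L l l'" shows "R (po_inL_obj K f j l) (po_inL_obj K f j l')"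
proof -
  have l: "l \<in> Obj L" "l' \<in> Obj L" using leq_Obj[OF posL le] by simp_all
  show ?thesis
  proof (cases "l' \<in> fst j ` Obj K")
    case True
    then obtain k' where k': "k' \<in> Obj K" "l' = fst j k'" by blast
    obtain \<phi> where \<phi>: "\<phi> \<in> Arr L" "Src L \<phi> = l" "Tgt L \<phi> = l'" using le unfolding leq_def by blast
    have "l \<in> fst j ` Obj K" using sieve[OF \<phi>(1)] \<phi> True by simp
    then obtain k where k: "k \<in> Obj K" "l = fst j k" by blast
    have "leq K k k'" using j_reflects_leq[OF k(1) k'(1)] le k k' by simp
    hence "leq X (fst f k) (fst f k')" using functor_leq[OF posK funf] by blast
    thus ?thesis using po_inL_obj_j k k' by (simp add: po_le_simps)
  next
    case False
    show ?thesis
    proof (cases "l \<in> fst j ` Obj K")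
      case True
      then obtain k where k: "k \<in> Obj K" "l = fst j k" by blast
      have "leq X (fst f k) (fst f k)" using leq_refl[OF posX f_Obj[OF k(1)]] .
      thus ?thesis using po_inL_obj_j[OF k(1)] po_inL_obj_not_j[OF False] k le by (auto simp: po_le_simps)
    next
      case F2: False
      thus ?thesis using po_inL_obj_not_j[OF False] po_inL_obj_not_j[OF F2] le by (simp add: po_le_simps)
    qed
  qed
qed

lemma functor_inX: "is_functor X P (po_inX L X)"
proof -
  have "is_functor X P ((\<lambda>x. {Inr x}), \<lambda>\<phi>. le_code L X ((\<lambda>x. {Inr x}) (Src X \<phi>)) ((\<lambda>x. {Inr x}) (Tgt X \<phi>)))"
    unfolding po_cat_def
  proof (rule thin_functor[OF catX thin_poset_po])
    fix a assume "a \<in> Obj X" thus "{Inr a} \<in> Ob" by (rule po_objI(2))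
  next
    fix \<phi> assume "\<phi> \<in> Arr X"
    hence "leq X (Src X \<phi>) (Tgt X \<phi>)" unfolding leq_def by blast
    thus "R {Inr (Src X \<phi>)} {Inr (Tgt X \<phi>)}" by (simp add: po_le_simps)
  qed
  thus ?thesis unfolding po_inX_def by simp
qed

lemma functor_inL: "is_functor L P (po_inL K L X f j)"
  unfolding po_inL_def po_cat_def
proof (rule thin_functor[OF catL thin_poset_po])
  fix a assume "a \<in> Obj L" thus "po_inL_obj K f j a \<in> Ob" by (rule po_inL_obj_in)
next
  fix \<phi> assume "\<phi> \<in> Arr L"
  hence "leq L (Src L \<phi>) (Tgt L \<phi>)" unfolding leq_def by blast
  thus "R (po_inL_obj K f j (Src L \<phi>)) (po_inL_obj K f j (Tgt L \<phi>))" by (rule po_le_po_inL_obj)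
qed

lemma inX_inL_commute: "ftr_eq K (fcomp (po_inX L X) f) (fcomp (po_inL K L X f j) j)"
  unfolding ftr_eq_def
proof (intro conjI ballI)
  fix k assume "k \<in> Obj K"
  thus "fst (fcomp (po_inX L X) f) k = fst (fcomp (po_inL K L X f j) j) k"
    unfolding fcomp_def po_inX_def po_inL_def by (simp add: po_inL_obj_j)
next
  fix \<phi> assume p: "\<phi> \<in> Arr K"
  have o: "Src K \<phi> \<in> Obj K" "Tgt K \<phi> \<in> Obj K" using categoryD(1,2)[OF catK p] by simp_all
  show "snd (fcomp (po_inX L X) f) \<phi> = snd (fcomp (po_inL K L X f j) j) \<phi>"
    unfolding fcomp_def po_inX_def po_inL_def using is_functorD(3,4)[OF funf p] is_functorD(3,4)[OF funj p] by (simp add: po_inL_obj_j o)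
qed

text \<open>In the mixed case \<open>m\<close> is the composite \<open>x \<le> f (\<rho> l) = j (\<rho> l) \<le> l\<close>.\<close>

lemma Arr_P_cases:
  assumes "m \<in> Arr P"
  obtains (inX) \<phi> where "\<phi> \<in> Arr X" "m = snd (po_inX L X) \<phi>"
  | (inL) \<psi> where "\<psi> \<in> Arr L" "m = snd (po_inL K L X f j) \<psi>"
  | (mixed) \<phi> \<psi> where "\<phi> \<in> Arr X" "\<psi> \<in> Arr L"
      "Tgt P (snd (po_inX L X) \<phi>) = Src P (snd (po_inL K L X f j) \<psi>)"
      "m = Cmp P (snd (po_inL K L X f j) \<psi>) (snd (po_inX L X) \<phi>)"
proof -
  obtain a b where ab: "a \<in> Ob" "b \<in> Ob" "R a b" "m = le_code L X a b" using assms by (rule Arr_PE)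
  from ab(1) show thesis
  proof (cases rule: po_objE)
    case A: (inl l)
    from ab(2) show thesis
    proof (cases rule: po_objE)
      case B: (inr x) then show thesis using ab A by (simp add: po_le_simps)
    next
      case B: (inl l')
      have "leq L l l'" using ab A B by (simp add: po_le_simps)
      note a = the_arr[OF posL this]
      show thesis
        by (rule inL[OF a(1)]) (use a ab(4) A B po_inL_obj_not_j in \<open>simp add: po_inL_def\<close>)
    qed
  next
    case A: (inr x)
    from ab(2) show thesis
    proof (cases rule: po_objE)
      case B: (inr x')
      have "leq X x x'" using ab A B by (simp add: po_le_simps)
      note a = the_arr[OF posX this]
      show thesis by (rule inX[OF a(1)]) (use a ab(4) A B in \<open>simp add: po_inX_def\<close>)
    next
      case B: (inl l)
      note m = po_le_Inr_Inl_rho[OF A(2) B(2) ab(3)[unfolded A B]]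
      note a1 = the_arr[OF posX m(3)] and a2 = the_arr[OF posL m(2)]
      have "Tgt P (snd (po_inX L X) (the_arr X x (fst f (\<rho> l)))) = {Inr (fst f (\<rho> l))}"
        "Src P (snd (po_inL K L X f j) (the_arr L (fst j (\<rho> l)) l)) = {Inr (fst f (\<rho> l))}"
        using is_functorD(3,4)[OF functor_inX a1(1)] is_functorD(3,4)[OF functor_inL a2(1)] a1 a2
          po_inL_obj_j[OF m(1)] by (simp_all add: po_inX_def po_inL_def)
      moreover have "Cmp P (snd (po_inL K L X f j) (the_arr L (fst j (\<rho> l)) l))
          (snd (po_inX L X) (the_arr X x (fst f (\<rho> l)))) = m"
        using a1 a2 ab(4) A B po_inL_obj_not_j[OF B(3)] m(1) f_Obj po_objI(2)
        by (simp add: P_simps po_inX_def po_inL_def src_le_code tgt_le_code po_objI)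
      ultimately show thesis using mixed[OF a1(1) a2(1)] by simp
    qed
  qed
qed

lemma ftr_eq_P_if_ftr_eq_inX_inL:
  assumes W: "is_functor P E W" and W': "is_functor P E W'"
    and eq_inX: "ftr_eq X (fcomp W (po_inX L X)) (fcomp W' (po_inX L X))"
    and eq_inL: "ftr_eq L (fcomp W (po_inL K L X f j)) (fcomp W' (po_inL K L X f j))"
  shows "ftr_eq P W W'"
  unfolding ftr_eq_def
proof (intro conjI ballI)
  fix a assume "a \<in> Obj P"
  then have "a \<in> Ob" by (simp add: P_simps)
  then show "fst W a = fst W' a"
  proof (cases rule: po_objE)
    case (inl l) then show ?thesis
      using ftr_eqD(1)[OF eq_inL inl(2)] po_inL_obj_not_j by (simp add: fcomp_def po_inL_def)
  next
    case (inr x) then show ?thesis using ftr_eqD(1)[OF eq_inX inr(2)] by (simp add: fcomp_def po_inX_def)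
  qed
next
  fix m assume "m \<in> Arr P"
  then show "snd W m = snd W' m"
  proof (cases rule: Arr_P_cases)
    case (inX \<phi>) then show ?thesis using ftr_eqD(2)[OF eq_inX] by (simp add: fcomp_def)
  next
    case (inL \<psi>) then show ?thesis using ftr_eqD(2)[OF eq_inL] by (simp add: fcomp_def)
  next
    case (mixed \<phi> \<psi>)
    note arrs = is_functorD(2)[OF functor_inX mixed(1)] is_functorD(2)[OF functor_inL mixed(2)]
    show ?thesis
      using is_functorD(6)[OF W arrs mixed(3)] is_functorD(6)[OF W' arrs mixed(3)] mixed
        ftr_eqD(2)[OF eq_inX mixed(1)] ftr_eqD(2)[OF eq_inL mixed(2)] by (simp add: fcomp_def)
  qed
qed

end

text \<open>The mediating functor; \<open>undefined\<close> codes the impossible arrows from \<open>L - j K\<close> to \<open>X\<close>.\<close>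

definition po_lift :: "('lo,'lm) cat \<Rightarrow> ('xo,'xm) cat \<Rightarrow> ('ko,'km,'xo,'xm) ftr \<Rightarrow> ('ko,'km,'lo,'lm) ftr \<Rightarrow> ('lo \<Rightarrow> 'ko)
   \<Rightarrow> ('eo,'em) cat \<Rightarrow> ('xo,'xm,'eo,'em) ftr \<Rightarrow> ('lo,'lm,'eo,'em) ftr \<Rightarrow> (('lo+'xo) set, ('lm+'xm) list set, 'eo, 'em) ftr" where
  "po_lift L X f j \<rho> E P0 Q = ((\<lambda>a. case the_elem a of Inl l \<Rightarrow> fst Q l | Inr x \<Rightarrow> fst P0 x),
     (\<lambda>m. case the_elem (le_code_src L X m) of
        Inr x \<Rightarrow> (case the_elem (le_code_tgt L X m) of Inr x' \<Rightarrow> snd P0 (the_arr X x x')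
                  | Inl l \<Rightarrow> Cmp E (snd Q (the_arr L (fst j (\<rho> l)) l)) (snd P0 (the_arr X x (fst f (\<rho> l)))))
      | Inl l \<Rightarrow> (case the_elem (le_code_tgt L X m) of Inl l' \<Rightarrow> snd Q (the_arr L l l') | Inr _ \<Rightarrow> undefined)))"

locale dwyer_cocone = dwyer_square K L X f j \<rho>
  for K :: "('ko,'km) cat" and L :: "('lo,'lm) cat" and X :: "('xo,'xm) cat"
    and f :: "('ko,'km,'xo,'xm) ftr" and j :: "('ko,'km,'lo,'lm) ftr" and \<rho> :: "'lo \<Rightarrow> 'ko" +
  fixes E :: "('eo,'em) cat" and P0 :: "('xo,'xm,'eo,'em) ftr" and Q :: "('lo,'lm,'eo,'em) ftr"
  assumes catE: "category E" and funP0: "is_functor X E P0" and funQ: "is_functor L E Q"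
    and eqPQ: "ftr_eq K (fcomp P0 f) (fcomp Q j)"
begin

abbreviation "W \<equiv> po_lift L X f j \<rho> E P0 Q"
abbreviation "px a b \<equiv> snd P0 (the_arr X a b)"
abbreviation "ql a b \<equiv> snd Q (the_arr L a b)"

lemma cocone_obj: "k \<in> Obj K \<Longrightarrow> fst P0 (fst f k) = fst Q (fst j k)"
  using ftr_eqD(1)[OF eqPQ] unfolding fcomp_def by simp

lemma px_arr: "leq X a b \<Longrightarrow> px a b \<in> Arr E \<and> Src E (px a b) = fst P0 a \<and> Tgt E (px a b) = fst P0 b"
  using functor_the_arr[OF posX funP0] by blast
lemma ql_arr: "leq L a b \<Longrightarrow> ql a b \<in> Arr E \<and> Src E (ql a b) = fst Q a \<and> Tgt E (ql a b) = fst Q b"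
  using functor_the_arr[OF posL funQ] by blast
lemma px_cmp: "leq X a b \<Longrightarrow> leq X b c \<Longrightarrow> Cmp E (px b c) (px a b) = px a c"
  by (rule functor_Cmp_the_arr[OF posX funP0])
lemma ql_cmp: "leq L a b \<Longrightarrow> leq L b c \<Longrightarrow> Cmp E (ql b c) (ql a b) = ql a c"
  by (rule functor_Cmp_the_arr[OF posL funQ])

lemma px_eq_ql: assumes "leq K k k'" shows "px (fst f k) (fst f k') = ql (fst j k) (fst j k')"
proof -
  have a: "the_arr K k k' \<in> Arr K" using the_arr[OF posK assms] by blast
  have "snd f (the_arr K k k') = the_arr X (fst f k) (fst f k')" by (rule functor_the_arr_eq[OF posK posX funf assms])
  moreover have "snd j (the_arr K k k') = the_arr L (fst j k) (fst j k')" by (rule functor_the_arr_eq[OF posK posL funj assms])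
  moreover have "snd P0 (snd f (the_arr K k k')) = snd Q (snd j (the_arr K k k'))"
    using ftr_eqD(2)[OF eqPQ a] unfolding fcomp_def by simp
  ultimately show ?thesis by simp
qed

lemma lift_obj: "fst W {Inr x} = fst P0 x" "fst W {Inl l} = fst Q l"
  unfolding po_lift_def by simp_all

lemma lift_Inr_Inr: "x \<in> Obj X \<Longrightarrow> x' \<in> Obj X \<Longrightarrow> snd W (le_code L X {Inr x} {Inr x'}) = px x x'"
  unfolding po_lift_def using src_le_code[OF po_objI(2)] tgt_le_code[OF po_objI(2)] by simp
lemma lift_Inr_Inl: "x \<in> Obj X \<Longrightarrow> l \<in> Obj L \<Longrightarrow> l \<notin> fst j ` Obj K \<Longrightarrow>
   snd W (le_code L X {Inr x} {Inl l}) = Cmp E (ql (fst j (\<rho> l)) l) (px x (fst f (\<rho> l)))"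
  unfolding po_lift_def using src_le_code[OF po_objI(2)] tgt_le_code[OF po_objI(1)] by simp
lemma lift_Inl_Inl: "l \<in> Obj L \<Longrightarrow> l \<notin> fst j ` Obj K \<Longrightarrow> l' \<in> Obj L \<Longrightarrow> l' \<notin> fst j ` Obj K \<Longrightarrow>
   snd W (le_code L X {Inl l} {Inl l'}) = ql l l'"
  unfolding po_lift_def using src_le_code[OF po_objI(1)] tgt_le_code[OF po_objI(1)] by simp

lemma lift_Inr_Inl_arr:
  assumes x: "x \<in> Obj X" and l: "l \<in> Obj L" and r: "R {Inr x} {Inl l}"
  shows "Cmp E (ql (fst j (\<rho> l)) l) (px x (fst f (\<rho> l))) \<in> Arr E"
    "Src E (Cmp E (ql (fst j (\<rho> l)) l) (px x (fst f (\<rho> l)))) = fst P0 x"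
    "Tgt E (Cmp E (ql (fst j (\<rho> l)) l) (px x (fst f (\<rho> l)))) = fst Q l"
proof -
  note m = po_le_Inr_Inl_rho[OF x l r]
  note A = px_arr[OF m(3)] and B = ql_arr[OF m(2)]
  have eq: "Tgt E (px x (fst f (\<rho> l))) = Src E (ql (fst j (\<rho> l)) l)" using A B cocone_obj[OF m(1)] by simp
  show "Cmp E (ql (fst j (\<rho> l)) l) (px x (fst f (\<rho> l))) \<in> Arr E"
    "Src E (Cmp E (ql (fst j (\<rho> l)) l) (px x (fst f (\<rho> l)))) = fst P0 x"
    "Tgt E (Cmp E (ql (fst j (\<rho> l)) l) (px x (fst f (\<rho> l)))) = fst Q l"
    using categoryD(6,7,8)[OF catE A[THEN conjunct1] B[THEN conjunct1] eq] A B by simp_all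
qed

lemma lift_arr:
  assumes a: "a \<in> Ob" and b: "b \<in> Ob" and r: "R a b"
  shows "snd W (le_code L X a b) \<in> Arr E \<and> Src E (snd W (le_code L X a b)) = fst W a \<and> Tgt E (snd W (le_code L X a b)) = fst W b"
  using a
proof (cases rule: po_objE)
  case A: (inl l)
  from b show ?thesis
  proof (cases rule: po_objE)
    case B: (inl l')
    have "leq L l l'" using r A B by (simp add: po_le_simps)
    thus ?thesis using A B lift_Inl_Inl lift_obj ql_arr by simp
  next
    case B: (inr x) thus ?thesis using r A by (simp add: po_le_simps)
  qed
next
  case A: (inr x)
  from b show ?thesis
  proof (cases rule: po_objE)
    case B: (inl l)
    thus ?thesis using A B lift_Inr_Inl lift_obj lift_Inr_Inl_arr r by simp
  next
    case B: (inr x')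
    have "leq X x x'" using r A B by (simp add: po_le_simps)
    thus ?thesis using A B lift_Inr_Inr lift_obj px_arr by simp
  qed
qed

lemma Cmp_lift_Inr_Inr_Inl:
  assumes x: "x \<in> Obj X" and x': "x' \<in> Obj X" and l: "l \<in> Obj L" and xx: "leq X x x'" and r: "R {Inr x'} {Inl l}"
  shows "Cmp E (Cmp E (ql (fst j (\<rho> l)) l) (px x' (fst f (\<rho> l)))) (px x x') = Cmp E (ql (fst j (\<rho> l)) l) (px x (fst f (\<rho> l)))"
proof -
  note m = po_le_Inr_Inl_rho[OF x' l r]
  note A = px_arr[OF xx] and B = px_arr[OF m(3)] and C = ql_arr[OF m(2)]
  have "Cmp E (Cmp E (ql (fst j (\<rho> l)) l) (px x' (fst f (\<rho> l)))) (px x x') =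
        Cmp E (ql (fst j (\<rho> l)) l) (Cmp E (px x' (fst f (\<rho> l))) (px x x'))"
    by (rule categoryD(11)[OF catE, symmetric]) (use A B C cocone_obj[OF m(1)] in simp_all)
  also have "Cmp E (px x' (fst f (\<rho> l))) (px x x') = px x (fst f (\<rho> l))" by (rule px_cmp[OF xx m(3)])
  finally show ?thesis .
qed

lemma Cmp_lift_Inr_Inl_Inl:
  assumes x: "x \<in> Obj X" and l: "l \<in> Obj L" and l': "l' \<in> Obj L" and ll: "leq L l l'" and r: "R {Inr x} {Inl l}"
  shows "Cmp E (ql l l') (Cmp E (ql (fst j (\<rho> l)) l) (px x (fst f (\<rho> l)))) = Cmp E (ql (fst j (\<rho> l')) l') (px x (fst f (\<rho> l')))"
proof -
  note m = po_le_Inr_Inl_rho[OF x l r]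
  have jl': "leq L (fst j (\<rho> l)) l'" using leq_trans[OF posL m(2) ll] .
  note r' = rho[OF l' m(1) jl']
  have r2: "R {Inr x} {Inl l'}" using m(1) m(3) jl' by (auto simp: po_le_simps)
  note m' = po_le_Inr_Inl_rho[OF x l' r2]
  have kk: "leq K (\<rho> l) (\<rho> l')" using r' by simp
  have jj: "leq L (fst j (\<rho> l)) (fst j (\<rho> l'))" using functor_leq[OF posK funj kk] .
  have ff: "leq X (fst f (\<rho> l)) (fst f (\<rho> l'))" using functor_leq[OF posK funf kk] .
  note A = px_arr[OF m(3)] and B = ql_arr[OF m(2)] and C = ql_arr[OF ll] and D = px_arr[OF ff] and F = ql_arr[OF m'(2)]
  have "Cmp E (ql l l') (Cmp E (ql (fst j (\<rho> l)) l) (px x (fst f (\<rho> l)))) =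
        Cmp E (Cmp E (ql l l') (ql (fst j (\<rho> l)) l)) (px x (fst f (\<rho> l)))"
    by (rule categoryD(11)[OF catE]) (use A B C cocone_obj[OF m(1)] in simp_all)
  also have "Cmp E (ql l l') (ql (fst j (\<rho> l)) l) = ql (fst j (\<rho> l)) l'" by (rule ql_cmp[OF m(2) ll])
  also have "ql (fst j (\<rho> l)) l' = Cmp E (ql (fst j (\<rho> l')) l') (ql (fst j (\<rho> l)) (fst j (\<rho> l')))"
    by (rule ql_cmp[OF jj m'(2), symmetric])
  also have "ql (fst j (\<rho> l)) (fst j (\<rho> l')) = px (fst f (\<rho> l)) (fst f (\<rho> l'))" by (rule px_eq_ql[OF kk, symmetric])
  also have "Cmp E (Cmp E (ql (fst j (\<rho> l')) l') (px (fst f (\<rho> l)) (fst f (\<rho> l')))) (px x (fst f (\<rho> l))) =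
      Cmp E (ql (fst j (\<rho> l')) l') (Cmp E (px (fst f (\<rho> l)) (fst f (\<rho> l'))) (px x (fst f (\<rho> l))))"
    by (rule categoryD(11)[OF catE, symmetric]) (use A D F cocone_obj[OF m'(1)] in simp_all)
  also have "Cmp E (px (fst f (\<rho> l)) (fst f (\<rho> l'))) (px x (fst f (\<rho> l))) = px x (fst f (\<rho> l'))"
    by (rule px_cmp[OF m(3) ff])
  finally show ?thesis .
qed

lemma lift_Idt: "a \<in> Ob \<Longrightarrow> snd W (le_code L X a a) = Idt E (fst W a)"
proof (erule po_objE)
  fix l assume "a = {Inl l}" "l \<in> Obj L" "l \<notin> fst j ` Obj K"
  thus ?thesis using lift_Inl_Inl lift_obj the_arr_Idt[OF posL] is_functorD(5)[OF funQ] by simp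
next
  fix x assume "a = {Inr x}" "x \<in> Obj X"
  thus ?thesis using lift_Inr_Inr lift_obj the_arr_Idt[OF posX] is_functorD(5)[OF funP0] by simp
qed

lemma lift_Cmp:
  assumes a: "a \<in> Ob" and b: "b \<in> Ob" and c: "c \<in> Ob" and ab: "R a b" and bc: "R b c"
  shows "snd W (le_code L X a c) = Cmp E (snd W (le_code L X b c)) (snd W (le_code L X a b))"
  using a
proof (cases rule: po_objE)
  case A: (inl l)
  from b show ?thesis
  proof (cases rule: po_objE)
    case B: (inr x) thus ?thesis using ab A by (simp add: po_le_simps)
  next
    case B: (inl l')
    from c show ?thesis
    proof (cases rule: po_objE)
      case C: (inr x) thus ?thesis using bc B by (simp add: po_le_simps)
    next
      case C: (inl l'')
      have "leq L l l'" "leq L l' l''" using ab bc A B C by (simp_all add: po_le_simps)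
      thus ?thesis using A B C lift_Inl_Inl ql_cmp by simp
    qed
  qed
next
  case A: (inr x)
  from b show ?thesis
  proof (cases rule: po_objE)
    case B: (inl l)
    from c show ?thesis
    proof (cases rule: po_objE)
      case C: (inr x) thus ?thesis using bc B by (simp add: po_le_simps)
    next
      case C: (inl l')
      have "leq L l l'" using bc B C by (simp add: po_le_simps)
      thus ?thesis using A B C lift_Inr_Inl lift_Inl_Inl Cmp_lift_Inr_Inl_Inl ab by simp
    qed
  next
    case B: (inr x')
    have xx: "leq X x x'" using ab A B by (simp add: po_le_simps)
    from c show ?thesis
    proof (cases rule: po_objE)
      case C: (inr x'')
      have "leq X x' x''" using bc B C by (simp add: po_le_simps)
      thus ?thesis using A B C lift_Inr_Inr px_cmp xx by simp
    next
      case C: (inl l)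
      thus ?thesis using A B C lift_Inr_Inl lift_Inr_Inr Cmp_lift_Inr_Inr_Inl xx bc by simp
    qed
  qed
qed

lemma functor_lift: "is_functor P E W"
  unfolding is_functor_def
proof (intro conjI ballI impI)
  fix a assume "a \<in> Obj P"
  hence "a \<in> Ob" by (simp add: P_simps)
  thus "fst W a \<in> Obj E"
  proof (cases rule: po_objE)
    case (inl l) thus ?thesis using lift_obj is_functorD(1)[OF funQ] by simp
  next
    case (inr x) thus ?thesis using lift_obj is_functorD(1)[OF funP0] by simp
  qed
  show "snd W (Idt P a) = Idt E (fst W a)" using lift_Idt \<open>a \<in> Ob\<close> by (simp add: P_simps)
next
  fix m assume "m \<in> Arr P"
  then obtain a b where ab: "a\<in>Ob" "b\<in>Ob" "R a b" "m = le_code L X a b" by (rule Arr_PE)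
  have st: "Src P m = a" "Tgt P m = b" using ab src_le_code tgt_le_code by (simp_all add: P_simps)
  show "snd W m \<in> Arr E" "Src E (snd W m) = fst W (Src P m)" "Tgt E (snd W m) = fst W (Tgt P m)"
    using lift_arr[OF ab(1-3)] ab(4) st by simp_all
next
  fix m1 m2 assume m1: "m1 \<in> Arr P" and m2: "m2 \<in> Arr P" and eq: "Tgt P m1 = Src P m2"
  obtain a b where ab: "a\<in>Ob" "b\<in>Ob" "R a b" "m1 = le_code L X a b" using m1 by (rule Arr_PE)
  obtain b' c where bc: "b'\<in>Ob" "c\<in>Ob" "R b' c" "m2 = le_code L X b' c" using m2 by (rule Arr_PE)
  have "b' = b" using eq ab bc src_le_code tgt_le_code by (simp add: P_simps)
  hence "Cmp P m2 m1 = le_code L X a c" using ab bc src_le_code tgt_le_code by (simp add: P_simps)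
  thus "snd W (Cmp P m2 m1) = Cmp E (snd W m2) (snd W m1)"
    using lift_Cmp[OF ab(1,2) bc(2) ab(3)] bc \<open>b' = b\<close> ab(4) by simp
qed

lemma lift_inX: "ftr_eq X (fcomp W (po_inX L X)) P0"
  unfolding ftr_eq_def
proof (intro conjI ballI)
  fix x assume "x \<in> Obj X" thus "fst (fcomp W (po_inX L X)) x = fst P0 x"
    unfolding fcomp_def po_inX_def using lift_obj by simp
next
  fix \<phi> assume p: "\<phi> \<in> Arr X"
  have o: "Src X \<phi> \<in> Obj X" "Tgt X \<phi> \<in> Obj X" using categoryD(1,2)[OF catX p] by simp_all
  show "snd (fcomp W (po_inX L X)) \<phi> = snd P0 \<phi>"
    unfolding fcomp_def po_inX_def using lift_Inr_Inr[OF o] the_arr_Src_Tgt[OF posX p] by simp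
qed

lemma lift_inL_arr:
  assumes p: "\<phi> \<in> Arr L"
  shows "snd W (snd (po_inL K L X f j) \<phi>) = snd Q \<phi>"
proof -
  define s t where "s = Src L \<phi>" and "t = Tgt L \<phi>"
  have o: "s \<in> Obj L" "t \<in> Obj L" using categoryD(1,2)[OF catL p] s_def t_def by simp_all
  have le: "leq L s t" unfolding leq_def s_def t_def using p by blast
  have ph: "\<phi> = the_arr L s t" using the_arr_Src_Tgt[OF posL p] s_def t_def by simp
  have V: "snd W (snd (po_inL K L X f j) \<phi>) = snd W (le_code L X (po_inL_obj K f j s) (po_inL_obj K f j t))"
    unfolding po_inL_def s_def t_def by simp
  show ?thesis
  proof (cases "t \<in> fst j ` Obj K")
    case True
    then obtain k' where k': "k' \<in> Obj K" "t = fst j k'" by blast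
    have "s \<in> fst j ` Obj K" using sieve[OF p] True s_def t_def by simp
    then obtain k where k: "k \<in> Obj K" "s = fst j k" by blast
    have kk: "leq K k k'" using j_reflects_leq[OF k(1) k'(1)] le k k' by simp
    show ?thesis using V po_inL_obj_j[OF k(1)] po_inL_obj_j[OF k'(1)] lift_Inr_Inr[OF f_Obj[OF k(1)] f_Obj[OF k'(1)]] px_eq_ql[OF kk] ph k k'
      by simp
  next
    case False
    note vt = po_inL_obj_not_j[OF False]
    show ?thesis
    proof (cases "s \<in> fst j ` Obj K")
      case True
      then obtain k where k: "k \<in> Obj K" "s = fst j k" by blast
      note r = rho[OF o(2) k(1) le[unfolded k(2)]]
      have kr: "leq L (fst j k) (fst j (\<rho> t))" using functor_leq[OF posK funj] r by blast
      have "snd W (snd (po_inL K L X f j) \<phi>) = Cmp E (ql (fst j (\<rho> t)) t) (px (fst f k) (fst f (\<rho> t)))"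
        using V po_inL_obj_j[OF k(1)] vt lift_Inr_Inl[OF f_Obj[OF k(1)] o(2) False] k by simp
      also have "px (fst f k) (fst f (\<rho> t)) = ql (fst j k) (fst j (\<rho> t))" using px_eq_ql r by blast
      also have "Cmp E (ql (fst j (\<rho> t)) t) (ql (fst j k) (fst j (\<rho> t))) = ql (fst j k) t"
        using ql_cmp[OF kr] r by blast
      finally show ?thesis using ph k by simp
    next
      case F2: False
      show ?thesis using V vt po_inL_obj_not_j[OF F2] lift_Inl_Inl[OF o(1) F2 o(2) False] ph by simp
    qed
  qed
qed

lemma lift_inL: "ftr_eq L (fcomp W (po_inL K L X f j)) Q"
  unfolding ftr_eq_def
proof (intro conjI ballI)
  fix l assume l: "l \<in> Obj L"
  show "fst (fcomp W (po_inL K L X f j)) l = fst Q l"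
  proof (cases "l \<in> fst j ` Obj K")
    case True
    then obtain k where "k \<in> Obj K" "l = fst j k" by blast
    thus ?thesis unfolding fcomp_def po_inL_def using po_inL_obj_j lift_obj cocone_obj by simp
  next
    case False thus ?thesis unfolding fcomp_def po_inL_def using po_inL_obj_not_j lift_obj by simp
  qed
next
  fix \<phi> assume "\<phi> \<in> Arr L"
  then show "snd (fcomp W (po_inL K L X f j)) \<phi> = snd Q \<phi>" using lift_inL_arr by (simp add: fcomp_def)
qed

lemma lift_unique:
  assumes "is_functor P E W'" "ftr_eq X (fcomp W' (po_inX L X)) P0" "ftr_eq L (fcomp W' (po_inL K L X f j)) Q"
  shows "ftr_eq P W W'"
  by (rule ftr_eq_P_if_ftr_eq_inX_inL[OF functor_lift assms(1) ftr_eq_trans[OF lift_inX ftr_eq_sym[OF assms(2)]]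
        ftr_eq_trans[OF lift_inL ftr_eq_sym[OF assms(3)]]])

end

context dwyer_square begin

lemma po_univ_po_cat:
  assumes catE: "category E"
  shows "po_univ K X L P f j (po_inX L X) (po_inL K L X f j) E"
  unfolding po_univ_def
proof (intro allI impI)
  fix P0 Q assume a: "is_functor X E P0 \<and> is_functor L E Q \<and> ftr_eq K (fcomp P0 f) (fcomp Q j)"
  interpret M: dwyer_cocone K L X f j \<rho> E P0 Q
    by (rule dwyer_cocone.intro, rule dwyer_square_axioms) (unfold_locales, use catE a in auto)
  show "\<exists>W. is_functor P E W \<and> ftr_eq X (fcomp W (po_inX L X)) P0 \<and> ftr_eq L (fcomp W (po_inL K L X f j)) Q \<and>
           (\<forall>W'. is_functor P E W' \<and> ftr_eq X (fcomp W' (po_inX L X)) P0 \<and> ftr_eq L (fcomp W' (po_inL K L X f j)) Q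
                  \<longrightarrow> ftr_eq P W W')"
    using M.functor_lift M.lift_inX M.lift_inL M.lift_unique by blast
qed

end

definition po_act_obj :: "('g \<Rightarrow> ('lo,'lm,'lo,'lm) ftr) \<Rightarrow> ('g \<Rightarrow> ('xo,'xm,'xo,'xm) ftr) \<Rightarrow> 'g \<Rightarrow> ('lo+'xo) set \<Rightarrow> ('lo+'xo) set" where
  "po_act_obj aL aX g a = (case the_elem a of Inl l \<Rightarrow> {Inl (fst (aL g) l)} | Inr x \<Rightarrow> {Inr (fst (aX g) x)})"

definition po_act :: "('lo,'lm) cat \<Rightarrow> ('xo,'xm) cat \<Rightarrow> ('g \<Rightarrow> ('lo,'lm,'lo,'lm) ftr) \<Rightarrow> ('g \<Rightarrow> ('xo,'xm,'xo,'xm) ftr) \<Rightarrow> 'g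
   \<Rightarrow> (('lo+'xo) set, ('lm+'xm) list set, ('lo+'xo) set, ('lm+'xm) list set) ftr" where
  "po_act L X aL aX g = (po_act_obj aL aX g, \<lambda>m. le_code L X (po_act_obj aL aX g (le_code_src L X m)) (po_act_obj aL aX g (le_code_tgt L X m)))"

lemma po_act_obj_simps: "po_act_obj aL aX g {Inl l} = {Inl (fst (aL g) l)}" "po_act_obj aL aX g {Inr x} = {Inr (fst (aX g) x)}"
  unfolding po_act_obj_def by simp_all

locale dwyer_gsquare = dwyer_square K L X f j \<rho>
  for K :: "('ko,'km) cat" and L :: "('lo,'lm) cat" and X :: "('xo,'xm) cat"
    and f :: "('ko,'km,'xo,'xm) ftr" and j :: "('ko,'km,'lo,'lm) ftr" and \<rho> :: "'lo \<Rightarrow> 'ko" +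
  fixes G :: "('g,'b) monoid_scheme" and aK :: "'g \<Rightarrow> ('ko,'km,'ko,'km) ftr"
    and aL :: "'g \<Rightarrow> ('lo,'lm,'lo,'lm) ftr" and aX :: "'g \<Rightarrow> ('xo,'xm,'xo,'xm) ftr"
  assumes grp: "group G" and gK: "gcat G K aK" and gL: "gcat G L aL" and gX: "gcat G X aX"
    and gf: "gfunctor G K aK X aX f" and gj: "gfunctor G K aK L aL j"
    and rho_eq: "\<And>g l k. g \<in> carrier G \<Longrightarrow> l \<in> Obj L \<Longrightarrow> k \<in> Obj K \<Longrightarrow> leq L (fst j k) l \<Longrightarrow>
        \<rho> (fst (aL g) l) = fst (aK g) (\<rho> l)"
begin

abbreviation "act \<equiv> po_act L X aL aX"

lemma aK_functor: "g \<in> carrier G \<Longrightarrow> is_functor K K (aK g)" by (rule gcatD(2)[OF gK])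
lemma aL_functor: "g \<in> carrier G \<Longrightarrow> is_functor L L (aL g)" by (rule gcatD(2)[OF gL])
lemma aX_functor: "g \<in> carrier G \<Longrightarrow> is_functor X X (aX g)" by (rule gcatD(2)[OF gX])

lemma j_equivariant: "g \<in> carrier G \<Longrightarrow> k \<in> Obj K \<Longrightarrow> fst j (fst (aK g) k) = fst (aL g) (fst j k)"
  by (rule gfunctorD(2)[OF gj])
lemma f_equivariant: "g \<in> carrier G \<Longrightarrow> k \<in> Obj K \<Longrightarrow> fst f (fst (aK g) k) = fst (aX g) (fst f k)"
  by (rule gfunctorD(2)[OF gf])

lemma act_not_in_image_j:
  assumes g: "g \<in> carrier G" and l: "l \<in> Obj L" and n: "l \<notin> fst j ` Obj K"
  shows "fst (aL g) l \<notin> fst j ` Obj K"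
proof
  assume "fst (aL g) l \<in> fst j ` Obj K"
  then obtain k where k: "k \<in> Obj K" "fst (aL g) l = fst j k" by blast
  have ig: "inv\<^bsub>G\<^esub> g \<in> carrier G" using group.inv_closed[OF grp g] .
  have "l = fst (aL (inv\<^bsub>G\<^esub> g)) (fst j k)" using gcat_inv_act[OF grp gL g l] k by simp
  also have "\<dots> = fst j (fst (aK (inv\<^bsub>G\<^esub> g)) k)" using j_equivariant[OF ig k(1)] by simp
  finally have "l \<in> fst j ` Obj K" using is_functorD(1)[OF aK_functor[OF ig] k(1)] by blast
  thus False using n by simp
qed

lemma po_act_obj_in: "g \<in> carrier G \<Longrightarrow> a \<in> Ob \<Longrightarrow> po_act_obj aL aX g a \<in> Ob"
proof (erule po_objE)
  fix l assume g: "g \<in> carrier G" and "a = {Inl l}" "l \<in> Obj L" "l \<notin> fst j ` Obj K"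
  thus ?thesis using act_not_in_image_j[OF g] is_functorD(1)[OF aL_functor[OF g]] po_objI(1) po_act_obj_simps by metis
next
  fix x assume g: "g \<in> carrier G" and "a = {Inr x}" "x \<in> Obj X"
  thus ?thesis using is_functorD(1)[OF aX_functor[OF g]] po_objI(2) po_act_obj_simps by metis
qed

lemma po_le_act: assumes g: "g \<in> carrier G" and a: "a \<in> Ob" and b: "b \<in> Ob" and r: "R a b"
  shows "R (po_act_obj aL aX g a) (po_act_obj aL aX g b)"
  using a
proof (cases rule: po_objE)
  case A: (inl l)
  from b show ?thesis
  proof (cases rule: po_objE)
    case B: (inr x) thus ?thesis using r A by (simp add: po_le_simps)
  next
    case B: (inl l')
    have "leq L l l'" using r A B by (simp add: po_le_simps)
    thus ?thesis using A B functor_leq[OF posL aL_functor[OF g]] by (simp add: po_le_simps po_act_obj_simps)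
  qed
next
  case A: (inr x)
  from b show ?thesis
  proof (cases rule: po_objE)
    case B: (inr x')
    have "leq X x x'" using r A B by (simp add: po_le_simps)
    thus ?thesis using A B functor_leq[OF posX aX_functor[OF g]] by (simp add: po_le_simps po_act_obj_simps)
  next
    case B: (inl l)
    obtain k where k: "k \<in> Obj K" "leq X x (fst f k)" "leq L (fst j k) l" using r A B by (auto simp: po_le_simps)
    have "leq X (fst (aX g) x) (fst (aX g) (fst f k))" using functor_leq[OF posX aX_functor[OF g] k(2)] .
    hence 1: "leq X (fst (aX g) x) (fst f (fst (aK g) k))" using f_equivariant[OF g k(1)] by simp
    have "leq L (fst (aL g) (fst j k)) (fst (aL g) l)" using functor_leq[OF posL aL_functor[OF g] k(3)] .
    hence 2: "leq L (fst j (fst (aK g) k)) (fst (aL g) l)" using j_equivariant[OF g k(1)] by simp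
    have 3: "fst (aK g) k \<in> Obj K" using is_functorD(1)[OF aK_functor[OF g] k(1)] .
    show ?thesis using A B 1 2 3 by (auto simp: po_le_simps po_act_obj_simps)
  qed
qed

lemma functor_act: "g \<in> carrier G \<Longrightarrow> is_functor P P (act g)"
proof -
  assume g: "g \<in> carrier G"
  have "is_functor P P (po_act_obj aL aX g, \<lambda>\<phi>. le_code L X (po_act_obj aL aX g (Src P \<phi>)) (po_act_obj aL aX g (Tgt P \<phi>)))"
    apply (subst (2) po_cat_def)
  proof (rule thin_functor[OF category_P thin_poset_po])
    fix a assume "a \<in> Obj P" thus "po_act_obj aL aX g a \<in> Ob" using po_act_obj_in[OF g] by (simp add: P_simps)
  next
    fix \<phi> assume "\<phi> \<in> Arr P"
    then obtain a b where "a\<in>Ob" "b\<in>Ob" "R a b" "\<phi> = le_code L X a b" by (rule Arr_PE)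
    thus "R (po_act_obj aL aX g (Src P \<phi>)) (po_act_obj aL aX g (Tgt P \<phi>))" using po_le_act[OF g] src_le_code tgt_le_code by (simp add: P_simps)
  qed
  thus ?thesis unfolding po_act_def P_simps .
qed

lemma po_act_obj_one: "a \<in> Ob \<Longrightarrow> po_act_obj aL aX \<one>\<^bsub>G\<^esub> a = a"
proof (erule po_objE)
  fix l assume "a = {Inl l}" "l \<in> Obj L"
  thus ?thesis using gcatD(3)[OF gL] by (simp add: po_act_obj_simps)
next
  fix x assume "a = {Inr x}" "x \<in> Obj X"
  thus ?thesis using gcatD(3)[OF gX] by (simp add: po_act_obj_simps)
qed

lemma po_act_obj_mult: "g \<in> carrier G \<Longrightarrow> h \<in> carrier G \<Longrightarrow> a \<in> Ob \<Longrightarrow> po_act_obj aL aX (g \<otimes>\<^bsub>G\<^esub> h) a = po_act_obj aL aX g (po_act_obj aL aX h a)"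
proof (erule po_objE)
  fix l assume gh: "g \<in> carrier G" "h \<in> carrier G" and "a = {Inl l}" "l \<in> Obj L"
  thus ?thesis using gcatD(5)[OF gL gh] by (simp add: po_act_obj_simps)
next
  fix x assume gh: "g \<in> carrier G" "h \<in> carrier G" and "a = {Inr x}" "x \<in> Obj X"
  thus ?thesis using gcatD(5)[OF gX gh] by (simp add: po_act_obj_simps)
qed

lemma gcat_P: "gcat G P act"
  unfolding gcat_def
proof (intro conjI ballI category_P functor_act)
  show "ftr_eq P (act \<one>\<^bsub>G\<^esub>) idF"
    unfolding ftr_eq_def
  proof (intro conjI ballI)
    fix a assume "a \<in> Obj P" thus "fst (act \<one>\<^bsub>G\<^esub>) a = fst idF a" using po_act_obj_one by (simp add: P_simps po_act_def idF_def)
  next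
    fix m assume "m \<in> Arr P"
    then obtain a b where "a\<in>Ob" "b\<in>Ob" "R a b" "m = le_code L X a b" by (rule Arr_PE)
    thus "snd (act \<one>\<^bsub>G\<^esub>) m = snd idF m" using po_act_obj_one src_le_code tgt_le_code by (simp add: po_act_def idF_def)
  qed
next
  fix g h assume g: "g \<in> carrier G" and h: "h \<in> carrier G"
  show "ftr_eq P (act (g \<otimes>\<^bsub>G\<^esub> h)) (fcomp (act g) (act h))"
    unfolding ftr_eq_def
  proof (intro conjI ballI)
    fix a assume "a \<in> Obj P" thus "fst (act (g \<otimes>\<^bsub>G\<^esub> h)) a = fst (fcomp (act g) (act h)) a"
      using po_act_obj_mult[OF g h] by (simp add: P_simps po_act_def fcomp_def)
  next
    fix m assume "m \<in> Arr P"
    then obtain a b where ab: "a\<in>Ob" "b\<in>Ob" "R a b" "m = le_code L X a b" by (rule Arr_PE)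
    have o: "po_act_obj aL aX h a \<in> Ob" "po_act_obj aL aX h b \<in> Ob" using po_act_obj_in[OF h] ab by simp_all
    show "snd (act (g \<otimes>\<^bsub>G\<^esub> h)) m = snd (fcomp (act g) (act h)) m"
      using po_act_obj_mult[OF g h] ab src_le_code tgt_le_code o by (simp add: po_act_def fcomp_def)
  qed
qed

lemma gfunctor_inX: "gfunctor G X aX P act (po_inX L X)"
  unfolding gfunctor_def
proof (intro conjI ballI functor_inX)
  fix g assume g: "g \<in> carrier G"
  show "ftr_eq X (fcomp (po_inX L X) (aX g)) (fcomp (act g) (po_inX L X))"
    unfolding ftr_eq_def
  proof (intro conjI ballI)
    fix x assume "x \<in> Obj X" thus "fst (fcomp (po_inX L X) (aX g)) x = fst (fcomp (act g) (po_inX L X)) x"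
      by (simp add: fcomp_def po_inX_def po_act_def po_act_obj_simps)
  next
    fix \<phi> assume p: "\<phi> \<in> Arr X"
    have o: "{Inr (Src X \<phi>)} \<in> Ob" "{Inr (Tgt X \<phi>)} \<in> Ob" by (rule po_objI(2), rule categoryD(1)[OF catX p]) (rule po_objI(2), rule categoryD(2)[OF catX p])
    show "snd (fcomp (po_inX L X) (aX g)) \<phi> = snd (fcomp (act g) (po_inX L X)) \<phi>"
      using is_functorD(3,4)[OF aX_functor[OF g] p] src_le_code[OF o(1)] tgt_le_code[OF o(2)] by (simp add: fcomp_def po_inX_def po_act_def po_act_obj_simps)
  qed
qed

lemma po_inL_obj_act: assumes g: "g \<in> carrier G" and l: "l \<in> Obj L"
  shows "po_inL_obj K f j (fst (aL g) l) = po_act_obj aL aX g (po_inL_obj K f j l)"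
proof (cases "l \<in> fst j ` Obj K")
  case True
  then obtain k where k: "k \<in> Obj K" "l = fst j k" by blast
  have "fst (aL g) l = fst j (fst (aK g) k)" using j_equivariant[OF g k(1)] k by simp
  moreover have "fst (aK g) k \<in> Obj K" using is_functorD(1)[OF aK_functor[OF g] k(1)] .
  ultimately show ?thesis using po_inL_obj_j k f_equivariant[OF g k(1)] by (simp add: po_act_obj_simps)
next
  case False
  thus ?thesis using po_inL_obj_not_j act_not_in_image_j[OF g l False] by (simp add: po_act_obj_simps)
qed

lemma gfunctor_inL: "gfunctor G L aL P act (po_inL K L X f j)"
  unfolding gfunctor_def
proof (intro conjI ballI functor_inL)
  fix g assume g: "g \<in> carrier G"
  show "ftr_eq L (fcomp (po_inL K L X f j) (aL g)) (fcomp (act g) (po_inL K L X f j))"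
    unfolding ftr_eq_def
  proof (intro conjI ballI)
    fix l assume "l \<in> Obj L" thus "fst (fcomp (po_inL K L X f j) (aL g)) l = fst (fcomp (act g) (po_inL K L X f j)) l"
      using po_inL_obj_act[OF g] by (simp add: fcomp_def po_inL_def po_act_def)
  next
    fix \<phi> assume p: "\<phi> \<in> Arr L"
    have o: "Src L \<phi> \<in> Obj L" "Tgt L \<phi> \<in> Obj L" using categoryD(1,2)[OF catL p] by simp_all
    have oo: "po_inL_obj K f j (Src L \<phi>) \<in> Ob" "po_inL_obj K f j (Tgt L \<phi>) \<in> Ob" using po_inL_obj_in o by simp_all
    show "snd (fcomp (po_inL K L X f j) (aL g)) \<phi> = snd (fcomp (act g) (po_inL K L X f j)) \<phi>"
      using is_functorD(3,4)[OF aL_functor[OF g] p] src_le_code[OF oo(1)] tgt_le_code[OF oo(2)] po_inL_obj_act[OF g o(1)] po_inL_obj_act[OF g o(2)]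
      by (simp add: fcomp_def po_inL_def po_act_def)
  qed
qed

end

lemma ftr_eq_fcomp_equivariant:
  assumes a: "is_functor C C a"
    and WU: "ftr_eq C (fcomp W U) F" and U: "ftr_eq C (fcomp U a) (fcomp b U)"
    and F: "ftr_eq C (fcomp F a) (fcomp e F)"
  shows "ftr_eq C (fcomp (fcomp W b) U) (fcomp (fcomp e W) U)"
  unfolding ftr_eq_def
proof (intro conjI ballI)
  fix x assume x: "x \<in> Obj C"
  have "fst W (fst b (fst U x)) = fst W (fst U (fst a x))" using ftr_eqD(1)[OF U x] by (simp add: fcomp_def)
  also have "\<dots> = fst F (fst a x)" using ftr_eqD(1)[OF WU is_functorD(1)[OF a x]] by (simp add: fcomp_def)
  also have "\<dots> = fst e (fst W (fst U x))" using ftr_eqD(1)[OF F x] ftr_eqD(1)[OF WU x] by (simp add: fcomp_def)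
  finally show "fst (fcomp (fcomp W b) U) x = fst (fcomp (fcomp e W) U) x" by (simp add: fcomp_def)
next
  fix \<phi> assume \<phi>: "\<phi> \<in> Arr C"
  have "snd W (snd b (snd U \<phi>)) = snd W (snd U (snd a \<phi>))" using ftr_eqD(2)[OF U \<phi>] by (simp add: fcomp_def)
  also have "\<dots> = snd F (snd a \<phi>)" using ftr_eqD(2)[OF WU is_functorD(2)[OF a \<phi>]] by (simp add: fcomp_def)
  also have "\<dots> = snd e (snd W (snd U \<phi>))" using ftr_eqD(2)[OF F \<phi>] ftr_eqD(2)[OF WU \<phi>] by (simp add: fcomp_def)
  finally show "snd (fcomp (fcomp W b) U) \<phi> = snd (fcomp (fcomp e W) U) \<phi>" by (simp add: fcomp_def)
qed

context dwyer_gsquare begin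

text \<open>The mediating functor of an equivariant cocone is equivariant: \<open>W \<circ> g\<close> and \<open>g \<circ> W\<close> agree
  on the images of \<open>X\<close> and \<open>L\<close>, hence everywhere.\<close>

lemma gfunctor_lift:
  assumes gE: "gcat G E aE" and gP0: "gfunctor G X aX E aE P0" and gQ: "gfunctor G L aL E aE Q"
    and eq: "ftr_eq K (fcomp P0 f) (fcomp Q j)"
  shows "gfunctor G P act E aE (po_lift L X f j \<rho> E P0 Q)"
proof -
  interpret M: dwyer_cocone K L X f j \<rho> E P0 Q
    by (rule dwyer_cocone.intro, rule dwyer_square_axioms)
      (unfold_locales, use gcatD(1)[OF gE] gfunctorD(1)[OF gP0] gfunctorD(1)[OF gQ] eq in auto)
  have "ftr_eq P (fcomp M.W (act g)) (fcomp (aE g) M.W)" if g: "g \<in> carrier G" for g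
  proof (rule ftr_eq_P_if_ftr_eq_inX_inL)
    show "is_functor P E (fcomp M.W (act g))" "is_functor P E (fcomp (aE g) M.W)"
      using is_functor_fcomp M.functor_lift functor_act[OF g] gcatD(2)[OF gE g] by blast+
    show "ftr_eq X (fcomp (fcomp M.W (act g)) (po_inX L X)) (fcomp (fcomp (aE g) M.W) (po_inX L X))"
      by (rule ftr_eq_fcomp_equivariant[OF aX_functor[OF g] M.lift_inX])
        (use gfunctor_inX gP0 g in \<open>auto simp: gfunctor_def\<close>)
    show "ftr_eq L (fcomp (fcomp M.W (act g)) (po_inL K L X f j)) (fcomp (fcomp (aE g) M.W) (po_inL K L X f j))"
      by (rule ftr_eq_fcomp_equivariant[OF aL_functor[OF g] M.lift_inL])
        (use gfunctor_inL gQ g in \<open>auto simp: gfunctor_def\<close>)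
  qed
  then show ?thesis unfolding gfunctor_def using M.functor_lift by blast
qed

lemma gpo_univ_po_cat:
  assumes gE: "gcat G E aE"
  shows "gpo_univ G K aK X aX L aL P act f j (po_inX L X) (po_inL K L X f j) E aE"
  unfolding gpo_univ_def
proof (intro allI impI)
  fix P0 Q assume a: "gfunctor G X aX E aE P0 \<and> gfunctor G L aL E aE Q \<and> ftr_eq K (fcomp P0 f) (fcomp Q j)"
  interpret M: dwyer_cocone K L X f j \<rho> E P0 Q
    by (rule dwyer_cocone.intro, rule dwyer_square_axioms)
      (unfold_locales, use gcatD(1)[OF gE] gfunctorD(1)[of G X aX E aE P0] gfunctorD(1)[of G L aL E aE Q] a in auto)
  show "\<exists>W. gfunctor G P act E aE W \<and> ftr_eq X (fcomp W (po_inX L X)) P0 \<and> ftr_eq L (fcomp W (po_inL K L X f j)) Q \<and>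
           (\<forall>W'. gfunctor G P act E aE W' \<and> ftr_eq X (fcomp W' (po_inX L X)) P0 \<and> ftr_eq L (fcomp W' (po_inL K L X f j)) Q
                  \<longrightarrow> ftr_eq P W W')"
    using gfunctor_lift[OF gE] a M.lift_inX M.lift_inL M.lift_unique gfunctorD(1) by blast
qed

end

lemma thin_update: "B = {e a b |a b. a\<in>A \<and> b\<in>A \<and> R' a b} \<Longrightarrow> (thin Ob R e s t)\<lparr>Obj := A, Arr := B\<rparr> = thin A R' e s t"
  unfolding thin_def by simp

locale dwyer_gsquare_fix = dwyer_gsquare K L X f j \<rho> G aK aL aX
  for K :: "('ko,'km) cat" and L :: "('lo,'lm) cat" and X :: "('xo,'xm) cat"
    and f :: "('ko,'km,'xo,'xm) ftr" and j :: "('ko,'km,'lo,'lm) ftr" and \<rho> :: "'lo \<Rightarrow> 'ko"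
    and G :: "('g,'b) monoid_scheme" and aK :: "'g \<Rightarrow> ('ko,'km,'ko,'km) ftr"
    and aL :: "'g \<Rightarrow> ('lo,'lm,'lo,'lm) ftr" and aX :: "'g \<Rightarrow> ('xo,'xm,'xo,'xm) ftr" +
  fixes H :: "'g set"
  assumes sub: "H \<subseteq> carrier G"
begin

abbreviation "K' \<equiv> fixcat K aK H"
abbreviation "L' \<equiv> fixcat L aL H"
abbreviation "X' \<equiv> fixcat X aX H"

lemma H_carrier: "h \<in> H \<Longrightarrow> h \<in> carrier G" using sub by blast
lemma fix_Obj_K: "k \<in> Obj K' \<Longrightarrow> k \<in> Obj K" by (simp add: fixcat_simps)
lemma fix_Obj_L: "k \<in> Obj L' \<Longrightarrow> k \<in> Obj L" by (simp add: fixcat_simps)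
lemma fix_Obj_X: "k \<in> Obj X' \<Longrightarrow> k \<in> Obj X" by (simp add: fixcat_simps)
lemma fix_Arr_L: "k \<in> Arr L' \<Longrightarrow> k \<in> Arr L" by (simp add: fixcat_simps)
lemma aK_functor_H: "h \<in> H \<Longrightarrow> is_functor K K (aK h)" by (rule aK_functor[OF H_carrier])
lemma aL_functor_H: "h \<in> H \<Longrightarrow> is_functor L L (aL h)" by (rule aL_functor[OF H_carrier])
lemma aX_functor_H: "h \<in> H \<Longrightarrow> is_functor X X (aX h)" by (rule aX_functor[OF H_carrier])

lemma poset_K': "is_poset K'" by (rule is_poset_fixcat[OF posK aK_functor_H])
lemma poset_L': "is_poset L'" by (rule is_poset_fixcat[OF posL aL_functor_H])
lemma poset_X': "is_poset X'" by (rule is_poset_fixcat[OF posX aX_functor_H])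
lemma functor_f': "is_functor K' X' f" by (rule is_functor_fixcat_gfunctor[OF gf sub])
lemma functor_j': "is_functor K' L' j" by (rule is_functor_fixcat_gfunctor[OF gj sub])

lemma fixed_if_j_fixed: assumes k: "k \<in> Obj K" and h: "h \<in> carrier G" and e: "fst (aL h) (fst j k) = fst j k"
  shows "fst (aK h) k = k"
proof -
  have "fst j (fst (aK h) k) = fst j k" using j_equivariant[OF h k] e by simp
  moreover have "fst (aK h) k \<in> Obj K" using is_functorD(1)[OF aK_functor[OF h] k] .
  ultimately show ?thesis using injj k unfolding inj_on_def by blast
qed

lemma image_j_fixcat: assumes l: "l \<in> Obj L'" shows "l \<in> fst j ` Obj K' \<longleftrightarrow> l \<in> fst j ` Obj K"
proof
  assume "l \<in> fst j ` Obj K'" thus "l \<in> fst j ` Obj K" using fix_Obj_K by blast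
next
  assume "l \<in> fst j ` Obj K"
  then obtain k where k: "k \<in> Obj K" "l = fst j k" by blast
  have "\<forall>h\<in>H. fst (aK h) k = k" using fixed_if_j_fixed[OF k(1) H_carrier] l k(2) by (simp add: fixcat_simps)
  hence "k \<in> Obj K'" using k(1) by (simp add: fixcat_simps)
  thus "l \<in> fst j ` Obj K'" using k(2) by blast
qed

lemma rho_fixed: assumes l: "l \<in> Obj L'" and k: "k \<in> Obj K" and le: "leq L (fst j k) l"
  shows "\<rho> l \<in> Obj K'"
proof -
  have l0: "l \<in> Obj L" using fix_Obj_L[OF l] .
  note r = rho[OF l0 k le]
  have "\<forall>h\<in>H. fst (aK h) (\<rho> l) = \<rho> l"
  proof
    fix h assume h: "h \<in> H"
    have "\<rho> (fst (aL h) l) = fst (aK h) (\<rho> l)" using rho_eq[OF H_carrier[OF h] l0 k le] .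
    moreover have "fst (aL h) l = l" using l h by (simp add: fixcat_simps)
    ultimately show "fst (aK h) (\<rho> l) = \<rho> l" by simp
  qed
  thus ?thesis using r by (simp add: fixcat_simps)
qed

lemma sieve_fixcat: assumes p: "\<phi> \<in> Arr L'" and t: "Tgt L' \<phi> \<in> fst j ` Obj K'"
  shows "Src L' \<phi> \<in> fst j ` Obj K'"
proof -
  have p0: "\<phi> \<in> Arr L" using fix_Arr_L[OF p] .
  have t0: "Tgt L \<phi> \<in> fst j ` Obj K" using t fix_Obj_K unfolding fixcat_simps by blast
  have s0: "Src L \<phi> \<in> fst j ` Obj K" using sieve[OF p0 t0] .
  have s1: "Src L' \<phi> \<in> Obj L'" using categoryD(1)[OF is_posetD(1)[OF poset_L'] p] .
  have "Src L' \<phi> = Src L \<phi>" unfolding fixcat_simps ..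
  thus ?thesis using image_j_fixcat[OF s1] s0 by simp
qed

lemma rho_fixcat: assumes l: "l \<in> Obj L'" and k: "k \<in> Obj K'" and le: "leq L' (fst j k) l"
  shows "\<rho> l \<in> Obj K' \<and> leq L' (fst j (\<rho> l)) l \<and> leq K' k (\<rho> l)"
proof -
  have k0: "k \<in> Obj K" and l0: "l \<in> Obj L" using fix_Obj_K[OF k] fix_Obj_L[OF l] by simp_all
  have jk: "fst j k \<in> Obj L'" using is_functorD(1)[OF functor_j' k] .
  have le0: "leq L (fst j k) l" using leq_fixcat[OF posL aL_functor_H jk l] le by blast
  note r = rho[OF l0 k0 le0]
  have rk: "\<rho> l \<in> Obj K'" by (rule rho_fixed[OF l k0 le0])
  have jr: "fst j (\<rho> l) \<in> Obj L'" using is_functorD(1)[OF functor_j' rk] .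
  have 1: "leq L' (fst j (\<rho> l)) l" using leq_fixcat[OF posL aL_functor_H jr l] r by blast
  have 2: "leq K' k (\<rho> l)" using leq_fixcat[OF posK aK_functor_H k rk] r by blast
  show ?thesis using rk 1 2 by blast
qed

lemma dwyer_square_fixcat: "dwyer_square K' L' X' f j \<rho>"
  unfolding dwyer_square_def
  using poset_K' poset_L' poset_X' functor_f' functor_j' inj_on_subset[OF injj] fix_Obj_K sieve_fixcat rho_fixcat
  by (intro conjI; blast)

interpretation F: dwyer_square K' L' X' f j \<rho> by (rule dwyer_square_fixcat)

lemma le_code_fixcat: "le_code L' X' = le_code L X" "le_code_src L' X' = le_code_src L X" "le_code_tgt L' X' = le_code_tgt L X"
  unfolding le_code_def le_code_src_def le_code_tgt_def idt_code_def code_obj_def fixcat_simps by (rule refl)+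

lemma po_inX_fixcat: "po_inX L' X' = po_inX L X" unfolding po_inX_def le_code_fixcat by (simp add: fixcat_simps)

lemma po_inL_obj_fixcat: assumes l: "l \<in> Obj L'" shows "po_inL_obj K' f j l = po_inL_obj K f j l"
proof (cases "l \<in> fst j ` Obj K")
  case True
  then obtain k where k: "k \<in> Obj K'" "l = fst j k" using image_j_fixcat[OF l] by blast
  have k0: "k \<in> Obj K" using fix_Obj_K k(1) by blast
  show ?thesis using k k0 F.po_inL_obj_j[OF k(1)] po_inL_obj_j[OF k0] by simp
next
  case False
  thus ?thesis using image_j_fixcat[OF l] po_inL_obj_not_j F.po_inL_obj_not_j by simp
qed

lemma po_inL_fixcat: "ftr_eq L' (po_inL K' L' X' f j) (po_inL K L X f j)"
  unfolding ftr_eq_def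
proof (intro conjI ballI)
  fix l assume "l \<in> Obj L'" thus "fst (po_inL K' L' X' f j) l = fst (po_inL K L X f j) l" using po_inL_obj_fixcat by (simp add: po_inL_def)
next
  fix \<phi> assume p: "\<phi> \<in> Arr L'"
  have "Src L \<phi> \<in> Obj L'" "Tgt L \<phi> \<in> Obj L'" using categoryD(1,2)[OF is_posetD(1)[OF poset_L'] p] by (simp_all add: fixcat_simps)
  thus "snd (po_inL K' L' X' f j) \<phi> = snd (po_inL K L X f j) \<phi>" using po_inL_obj_fixcat by (simp add: po_inL_def le_code_fixcat fixcat_simps)
qed

lemma po_le_fixcat: assumes a: "a \<in> po_obj K' L' X' j" and b: "b \<in> po_obj K' L' X' j"
  shows "po_le K' L' X' f j a b = R a b"
  using a
proof (cases rule: po_objE)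
  case A: (inl l)
  from b show ?thesis
  proof (cases rule: po_objE)
    case B: (inr x) thus ?thesis using A by (simp add: po_le_simps)
  next
    case B: (inl l') thus ?thesis using A leq_fixcat[OF posL aL_functor_H A(2) B(2)] by (simp add: po_le_simps)
  qed
next
  case A: (inr x)
  from b show ?thesis
  proof (cases rule: po_objE)
    case B: (inr x') thus ?thesis using A leq_fixcat[OF posX aX_functor_H A(2) B(2)] by (simp add: po_le_simps)
  next
    case B: (inl l)
    have x0: "x \<in> Obj X" and l0: "l \<in> Obj L" using fix_Obj_X[OF A(2)] fix_Obj_L[OF B(2)] by simp_all
    show ?thesis
    proof
      assume "po_le K' L' X' f j a b"
      then obtain k where k: "k \<in> Obj K'" "leq X' x (fst f k)" "leq L' (fst j k) l" using A B by (auto simp: po_le_simps)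
      have "k \<in> Obj K" using fix_Obj_K k(1) by blast
      moreover have "leq X x (fst f k)" "leq L (fst j k) l" using k unfolding leq_def by (auto simp: fixcat_simps)
      ultimately show "R a b" using A B by (auto simp: po_le_simps)
    next
      assume r: "R a b"
      have r': "R {Inr x} {Inl l}" using r A B by simp
      note m = po_le_Inr_Inl_rho[OF x0 l0 r']
      have rk: "\<rho> l \<in> Obj K'" by (rule rho_fixed[OF B(2) m(1,2)])
      have fr: "fst f (\<rho> l) \<in> Obj X'" using is_functorD(1)[OF functor_f' rk] .
      have jr: "fst j (\<rho> l) \<in> Obj L'" using is_functorD(1)[OF functor_j' rk] .
      have "leq X' x (fst f (\<rho> l))" "leq L' (fst j (\<rho> l)) l"
        using leq_fixcat[OF posX aX_functor_H A(2) fr] leq_fixcat[OF posL aL_functor_H jr B(2)] m by simp_all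
      thus "po_le K' L' X' f j a b" using A B rk by (auto simp: po_le_simps)
    qed
  qed
qed

lemma fixed_po_obj: "{a \<in> Ob. \<forall>h\<in>H. po_act_obj aL aX h a = a} = po_obj K' L' X' j"
proof (intro Set.set_eqI iffI)
  fix a assume a: "a \<in> {a \<in> Ob. \<forall>h\<in>H. po_act_obj aL aX h a = a}"
  hence a0: "a \<in> Ob" and fx: "\<And>h. h \<in> H \<Longrightarrow> po_act_obj aL aX h a = a" by blast+
  from a0 show "a \<in> po_obj K' L' X' j"
  proof (cases rule: po_objE)
    case (inl l)
    have "\<forall>h\<in>H. fst (aL h) l = l" using fx inl by (simp add: po_act_obj_simps)
    hence l': "l \<in> Obj L'" using inl by (simp add: fixcat_simps)
    hence "l \<notin> fst j ` Obj K'" using image_j_fixcat inl by blast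
    thus ?thesis using l' inl po_objI(1) by metis
  next
    case (inr x)
    have "\<forall>h\<in>H. fst (aX h) x = x" using fx inr by (simp add: po_act_obj_simps)
    hence "x \<in> Obj X'" using inr by (simp add: fixcat_simps)
    thus ?thesis using inr po_objI(2) by metis
  qed
next
  fix a assume "a \<in> po_obj K' L' X' j"
  thus "a \<in> {a \<in> Ob. \<forall>h\<in>H. po_act_obj aL aX h a = a}"
  proof (cases rule: po_objE)
    case (inl l)
    have "l \<notin> fst j ` Obj K" using image_j_fixcat inl by blast
    moreover have "l \<in> Obj L" "\<forall>h\<in>H. fst (aL h) l = l" using inl by (simp_all add: fixcat_simps)
    ultimately show ?thesis using inl po_objI(1)[of l L j K X] by (simp add: po_act_obj_simps)
  next
    case (inr x)
    have "x \<in> Obj X" "\<forall>h\<in>H. fst (aX h) x = x" using inr by (simp_all add: fixcat_simps)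
    thus ?thesis using inr po_objI(2)[of x X K L j] by (simp add: po_act_obj_simps)
  qed
qed

lemma fixed_po_arr: "{m \<in> Arr P. \<forall>h\<in>H. snd (act h) m = m} =
   {le_code L X a b |a b. a \<in> po_obj K' L' X' j \<and> b \<in> po_obj K' L' X' j \<and> po_le K' L' X' f j a b}"
proof (intro Set.set_eqI iffI)
  fix m assume "m \<in> {m \<in> Arr P. \<forall>h\<in>H. snd (act h) m = m}"
  hence m: "m \<in> Arr P" and fx: "\<And>h. h \<in> H \<Longrightarrow> snd (act h) m = m" by blast+
  obtain a b where ab: "a\<in>Ob" "b\<in>Ob" "R a b" "m = le_code L X a b" using m by (rule Arr_PE)
  have "\<And>h. h \<in> H \<Longrightarrow> po_act_obj aL aX h a = a \<and> po_act_obj aL aX h b = b"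
  proof -
    fix h assume h: "h \<in> H"
    have "le_code L X (po_act_obj aL aX h a) (po_act_obj aL aX h b) = le_code L X a b" using fx[OF h] ab src_le_code tgt_le_code by (simp add: po_act_def)
    thus "po_act_obj aL aX h a = a \<and> po_act_obj aL aX h b = b" using thin_poset.code_inj[OF thin_poset_po] po_act_obj_in[OF H_carrier[OF h]] ab by blast
  qed
  hence "a \<in> po_obj K' L' X' j" "b \<in> po_obj K' L' X' j" using fixed_po_obj ab by blast+
  thus "m \<in> {le_code L X a b |a b. a \<in> po_obj K' L' X' j \<and> b \<in> po_obj K' L' X' j \<and> po_le K' L' X' f j a b}"
    using po_le_fixcat ab by blast
next
  fix m assume "m \<in> {le_code L X a b |a b. a \<in> po_obj K' L' X' j \<and> b \<in> po_obj K' L' X' j \<and> po_le K' L' X' f j a b}"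
  then obtain a b where ab: "a \<in> po_obj K' L' X' j" "b \<in> po_obj K' L' X' j" "po_le K' L' X' f j a b" "m = le_code L X a b" by blast
  have a0: "a \<in> Ob" "\<forall>h\<in>H. po_act_obj aL aX h a = a" and b0: "b \<in> Ob" "\<forall>h\<in>H. po_act_obj aL aX h b = b"
    using ab(1,2) fixed_po_obj by blast+
  have r: "R a b" using po_le_fixcat ab by simp
  have "m \<in> Arr P" using Arr_PI[OF a0(1) b0(1) r] ab(4) by simp
  moreover have "\<forall>h\<in>H. snd (act h) m = m" using ab(4) a0 b0 src_le_code tgt_le_code by (simp add: po_act_def)
  ultimately show "m \<in> {m \<in> Arr P. \<forall>h\<in>H. snd (act h) m = m}" by blast
qed

lemma fixcat_po_cat: "fixcat P act H = po_cat K' L' X' f j"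
proof -
  have "fixcat P act H = P\<lparr>Obj := {a \<in> Ob. \<forall>h\<in>H. po_act_obj aL aX h a = a}, Arr := {m \<in> Arr P. \<forall>h\<in>H. snd (act h) m = m}\<rparr>"
    unfolding fixcat_def by (simp add: P_simps po_act_def)
  also have "\<dots> = P\<lparr>Obj := po_obj K' L' X' j, Arr := {le_code L X a b |a b. a \<in> po_obj K' L' X' j \<and> b \<in> po_obj K' L' X' j \<and> po_le K' L' X' f j a b}\<rparr>"
    unfolding fixed_po_obj fixed_po_arr ..
  also have "\<dots> = po_cat K' L' X' f j"
    unfolding po_cat_def[of K L X f j] po_cat_def[of K' L' X' f j] le_code_fixcat
    by (rule thin_update) simp
  finally show ?thesis .
qed

end

context dwyer_gsquare_fix
begin

lemma comm_square_fixcat: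
  assumes gY: "gcat G Y aY" and gU: "gfunctor G X aX Y aY U" and gV: "gfunctor G L aL Y aY V"
    and comm: "ftr_eq K (fcomp U f) (fcomp V j)"
  shows "comm_square K' X' L' (fixcat Y aY H) f j U V"
  unfolding comm_square_def
  using is_posetD(1)[OF poset_K'] is_posetD(1)[OF poset_X'] is_posetD(1)[OF poset_L']
    category_fixcat[OF gcatD(1)[OF gY] gcatD(2)[OF gY H_carrier]] functor_f' functor_j'
    is_functor_fixcat_gfunctor[OF gU sub] is_functor_fixcat_gfunctor[OF gV sub]
    ftr_eq_subcat[OF comm fixcat_subset] by (intro conjI)

text \<open>An equivariant comparison between \<open>Y\<close> and the explicit pushout restricts to the fixed points,
  where the explicit pushout is again the explicit pushout of the fixed-point square.\<close>

lemma po_univ_fixcat: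
  assumes gY: "gcat G Y aY"
    and Psi: "gfunctor G Y aY P act Psi" and Phi: "gfunctor G P act Y aY Phi"
    and id: "ftr_eq Y (fcomp Phi Psi) idF"
    and Psi_U: "ftr_eq X (fcomp Psi U) (po_inX L X)" and Psi_V: "ftr_eq L (fcomp Psi V) (po_inL K L X f j)"
    and Phi_U: "ftr_eq X (fcomp Phi (po_inX L X)) U" and Phi_V: "ftr_eq L (fcomp Phi (po_inL K L X f j)) V"
    and E: "category E"
  shows "po_univ K' X' L' (fixcat Y aY H) f j U V E"
proof (rule po_univ_transfer[OF dwyer_square.po_univ_po_cat[OF dwyer_square_fixcat E]])
  show "is_functor (po_cat K' L' X' f j) (fixcat Y aY H) Phi"
    using is_functor_fixcat_gfunctor[OF Phi sub] fixcat_po_cat by simp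
  show "is_functor (fixcat Y aY H) (po_cat K' L' X' f j) Psi"
    using is_functor_fixcat_gfunctor[OF Psi sub] fixcat_po_cat by simp
  show "ftr_eq (fixcat Y aY H) (fcomp Phi Psi) idF" by (rule ftr_eq_subcat[OF id fixcat_subset])
  show "ftr_eq X' (fcomp Psi U) (po_inX L' X')"
    unfolding po_inX_fixcat by (rule ftr_eq_subcat[OF Psi_U fixcat_subset])
  show "ftr_eq L' (fcomp Psi V) (po_inL K' L' X' f j)"
    by (rule ftr_eq_trans[OF ftr_eq_subcat[OF Psi_V fixcat_subset] ftr_eq_sym[OF po_inL_fixcat]])
  show "ftr_eq X' (fcomp Phi (po_inX L' X')) U"
    unfolding po_inX_fixcat by (rule ftr_eq_subcat[OF Phi_U fixcat_subset])
  show "ftr_eq L' (fcomp Phi (po_inL K' L' X' f j)) V"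
    by (rule ftr_eq_trans[OF ftr_eq_fcomp_left[OF po_inL_fixcat] ftr_eq_subcat[OF Phi_V fixcat_subset]])
qed

end

section \<open>Dwyer maps\<close>

lemma dwyer_gmapE:
  assumes "dwyer_gmap G K aK L aL j"
  obtains OT MT r \<epsilon> where "gfunctor G K aK L aL j" "inj_on (fst j) (Obj K)"
    "\<And>\<phi>. \<phi> \<in> Arr L \<Longrightarrow> Tgt L \<phi> \<in> fst j ` Obj K \<Longrightarrow> Src L \<phi> \<in> fst j ` Obj K"
    "fst j ` Obj K \<subseteq> OT" "MT \<subseteq> Arr L"
    "\<forall>\<phi>\<in>Arr L. Src L \<phi> \<in> OT \<longrightarrow> \<phi> \<in> MT \<and> Tgt L \<phi> \<in> OT"
    "gfunctor G (subcat L OT MT) aL K aK r" "adjunction K (subcat L OT MT) j r (\<lambda>a. Idt K a) \<epsilon>"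
proof -
  obtain OT MT r \<epsilon> where j: "gfunctor G K aK L aL j" "inj_on (fst j) (Obj K)"
    and sieve: "\<forall>\<phi>\<in>Arr L. Tgt L \<phi> \<in> fst j ` Obj K \<longrightarrow> \<phi> \<in> snd j ` Arr K \<and> Src L \<phi> \<in> fst j ` Obj K"
    and T: "is_subcat L OT MT" and cosieve: "\<forall>\<phi>\<in>Arr L. Src L \<phi> \<in> OT \<longrightarrow> \<phi> \<in> MT \<and> Tgt L \<phi> \<in> OT"
    and jOT: "fst j ` Obj K \<subseteq> OT"
    and r: "gfunctor G (subcat L OT MT) aL K aK r" "adjunction K (subcat L OT MT) j r (\<lambda>a. Idt K a) \<epsilon>"
    using assms unfolding dwyer_gmap_def by (elim exE conjE) (rule that; assumption)
  have MT: "MT \<subseteq> Arr L" using T unfolding is_subcat_def by (elim conjE)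
  show thesis using that[OF j _ jOT MT cosieve r] sieve by blast
qed

lemma right_adjoint_greatest_below:
  assumes K: "category K"
    and cosieve: "\<forall>\<phi>\<in>Arr L. Src L \<phi> \<in> OT \<longrightarrow> \<phi> \<in> MT \<and> Tgt L \<phi> \<in> OT"
    and MT: "MT \<subseteq> Arr L" and jOT: "fst j ` Obj K \<subseteq> OT"
    and adj: "adjunction K (subcat L OT MT) j r (\<lambda>a. Idt K a) \<epsilon>"
    and k: "k \<in> Obj K" and le: "leq L (fst j k) l"
  shows "l \<in> OT" "fst r l \<in> Obj K" "leq L (fst j (fst r l)) l" "leq K k (fst r l)"
proof -
  let ?T = "subcat L OT MT"
  have r: "is_functor ?T K r" and eta: "nat_trans K K idF (fcomp r j) (\<lambda>a. Idt K a)"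
    and eps: "nat_trans ?T ?T (fcomp j r) idF \<epsilon>"
    using adj unfolding adjunction_def by blast+
  have rj: "fst r (fst j k) = k"
    using eta k categoryD(5)[OF K k] unfolding nat_trans_def fcomp_def by auto
  obtain \<phi> where \<phi>: "\<phi> \<in> Arr L" "Src L \<phi> = fst j k" "Tgt L \<phi> = l" using le unfolding leq_def by blast
  then have \<phi>T: "\<phi> \<in> MT" "l \<in> OT" using cosieve jOT k by blast+
  then show "l \<in> OT" by simp
  show "fst r l \<in> Obj K" using is_functorD(1)[OF r] \<phi>T(2) by (simp add: subcat_simps)
  show "leq K k (fst r l)"
    using is_functorD(2,3,4)[OF r] \<phi> \<phi>T rj unfolding leq_def by (force simp: subcat_simps)
  have "\<epsilon> l \<in> MT" "Src L (\<epsilon> l) = fst j (fst r l)" "Tgt L (\<epsilon> l) = l"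
    using eps \<phi>T(2) unfolding nat_trans_def subcat_simps fcomp_def idF_def by simp_all
  then show "leq L (fst j (fst r l)) l" using MT unfolding leq_def by blast
qed

lemma dwyer_gsquare_if_dwyer_gmap:
  assumes G: "group G" and K: "gposet G K aK" and L: "gposet G L aL" and X: "gposet G X aX"
    and j: "dwyer_gmap G K aK L aL j" and f: "gfunctor G K aK X aX f"
  obtains \<rho> where "dwyer_gsquare K L X f j \<rho> G aK aL aX"
proof -
  obtain OT MT r \<epsilon> where gj: "gfunctor G K aK L aL j" and inj: "inj_on (fst j) (Obj K)"
    and sieve: "\<And>\<phi>. \<phi> \<in> Arr L \<Longrightarrow> Tgt L \<phi> \<in> fst j ` Obj K \<Longrightarrow> Src L \<phi> \<in> fst j ` Obj K"
    and jOT: "fst j ` Obj K \<subseteq> OT" and MT: "MT \<subseteq> Arr L"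
    and cosieve: "\<forall>\<phi>\<in>Arr L. Src L \<phi> \<in> OT \<longrightarrow> \<phi> \<in> MT \<and> Tgt L \<phi> \<in> OT"
    and gr: "gfunctor G (subcat L OT MT) aL K aK r" and adj: "adjunction K (subcat L OT MT) j r (\<lambda>a. Idt K a) \<epsilon>"
    by (rule dwyer_gmapE[OF j]) (rule that; assumption)
  have posK: "is_poset K" and posL: "is_poset L" and posX: "is_poset X"
    and gK: "gcat G K aK" and gL: "gcat G L aL" and gX: "gcat G X aX"
    using K L X unfolding gposet_def by blast+
  note greatest = right_adjoint_greatest_below[OF is_posetD(1)[OF posK] cosieve MT jOT adj]
  have "dwyer_gsquare K L X f j (fst r) G aK aL aX"
  proof (intro dwyer_gsquare.intro dwyer_square.intro dwyer_gsquare_axioms.intro)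
    show "fst r (fst (aL g) l) = fst (aK g) (fst r l)"
      if "g \<in> carrier G" "l \<in> Obj L" "k \<in> Obj K" "leq L (fst j k) l" for g l k
      using gfunctorD(2)[OF gr that(1)] greatest(1)[OF that(3,4)] by (simp add: subcat_simps)
  qed (use posK posL posX gfunctorD(1)[OF f] gfunctorD(1)[OF gj] inj sieve greatest(2-4) G gK gL gX f gj
       in \<open>blast+\<close>)
  then show thesis by (rule that)
qed

theorem lemma4p8:
  fixes G :: "('g, 'b) monoid_scheme"
    and K :: "('ko, 'km) cat" and aK :: "'g \<Rightarrow> ('ko, 'km, 'ko, 'km) ftr"
    and L :: "('lo, 'lm) cat" and aL :: "'g \<Rightarrow> ('lo, 'lm, 'lo, 'lm) ftr"
    and X :: "('xo, 'xm) cat" and aX :: "'g \<Rightarrow> ('xo, 'xm, 'xo, 'xm) ftr"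
    and j :: "('ko, 'km, 'lo, 'lm) ftr" and f :: "('ko, 'km, 'xo, 'xm) ftr"
    and Y :: "(('lo + 'xo) set, ('lm + 'xm) list set) cat"
    and aY :: "'g \<Rightarrow> (('lo + 'xo) set, ('lm + 'xm) list set, ('lo + 'xo) set, ('lm + 'xm) list set) ftr"
    and U :: "('xo, 'xm, ('lo + 'xo) set, ('lm + 'xm) list set) ftr"
    and V :: "('lo, 'lm, ('lo + 'xo) set, ('lm + 'xm) list set) ftr"
  assumes "group G"
    and "gposet G K aK" and "gposet G L aL" and "gposet G X aX"
    and "dwyer_gmap G K aK L aL j"
    and "gfunctor G K aK X aX f"
    and "gpushout G K aK X aX L aL Y aY f j U V"
  shows "is_poset Y \<and>
    (\<forall>H. subgroup H G \<longrightarrow>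
       comm_square (fixcat K aK H) (fixcat X aX H) (fixcat L aL H) (fixcat Y aY H) f j U V \<and>
       (\<forall>E :: ('eo, 'em) cat. category E \<longrightarrow>
          po_univ (fixcat K aK H) (fixcat X aX H) (fixcat L aL H) (fixcat Y aY H) f j U V E))"
proof -
  obtain \<rho> where "dwyer_gsquare K L X f j \<rho> G aK aL aX"
    using dwyer_gsquare_if_dwyer_gmap[OF assms(1-6)] .
  then interpret dwyer_gsquare K L X f j \<rho> G aK aL aX .
  have gY: "gcat G Y aY" and gU: "gfunctor G X aX Y aY U" and gV: "gfunctor G L aL Y aY V"
    and comm: "ftr_eq K (fcomp U f) (fcomp V j)"
    using assms(7) unfolding gpushout_def by blast+
  obtain Psi Phi where Psi: "gfunctor G Y aY P act Psi" and Phi: "gfunctor G P act Y aY Phi"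
    and retraction: "ftr_eq Y (fcomp Phi Psi) idF"
    and Psi_U: "ftr_eq X (fcomp Psi U) (po_inX L X)" and Psi_V: "ftr_eq L (fcomp Psi V) (po_inL K L X f j)"
    and Phi_U: "ftr_eq X (fcomp Phi (po_inX L X)) U" and Phi_V: "ftr_eq L (fcomp Phi (po_inL K L X f j)) V"
    by (rule gpushout_retraction[OF assms(7) gcat_P gfunctor_inX gfunctor_inL inX_inL_commute
          gpo_univ_po_cat[OF gY]])
  have "is_poset Y"
    by (rule is_poset_if_retract[OF gcatD(1)[OF gY] poset_P gfunctorD(1)[OF Psi] retraction])
  moreover have "comm_square (fixcat K aK H) (fixcat X aX H) (fixcat L aL H) (fixcat Y aY H) f j U V \<and>
      (\<forall>E :: ('eo, 'em) cat. category E \<longrightarrow>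
          po_univ (fixcat K aK H) (fixcat X aX H) (fixcat L aL H) (fixcat Y aY H) f j U V E)"
    if "subgroup H G" for H
  proof -
    interpret dwyer_gsquare_fix K L X f j \<rho> G aK aL aX H
      by unfold_locales (rule subgroup.subset[OF that])
    show ?thesis
      using comm_square_fixcat[OF gY gU gV comm] po_univ_fixcat[OF gY Psi Phi retraction Psi_U Psi_V Phi_U Phi_V]
      by blast
  qed
  ultimately show ?thesis by blast
qed

end
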